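(* Each non-empty stunted sawtooth bone $B^{\rm saw}_\pm(o)$ of period $p\ge2$ is a simple arc with both endpoints on a common edge of the triangle $\overline T$, and it is made up of three line segments which are alternately horizontal and vertical (in the coordinates $(w_1,w_2)$). Any pair $B^{\rm saw}_-(o)$ and $B^{\rm saw}_+(o')$ of such bones intersect transversally in either $0$, $2$, or $4$ points. Dual bones $B^{\rm saw}_-(o)$ and $B^{\rm saw}_+(o)$ (same order type) always intersect in exactly two points.
   Context: $\overline T=\{(w_1,w_2)\in\mathbb R^2: 1\ge w_1\ge w_2\ge0\}$, whose edges are $\{w_1=1\}$, $\{w_2=0\}$, $\{w_1=w_2\}$. For $\mathbf w\in\overline T$, the stunted sawtooth map $S_{\mathbf w}:[0,1]\to[0,1]$ is $S_{\mathbf w}(x)=\min(3x,w_1)$ on $[0,1/3]$, $\min(w_1,\max(w_2,2-3x))$ on $[1/3,2/3]$, $\max(3x-2,w_2)$ on $[2/3,1]$. A periodic orbit $x_1<\dots<x_p$ of $g$ has order type $o$ (cyclic permutation of $\{1,\dots,p\}$) if $g(x_i)=x_{o(i)}$. $B^{\rm saw}_-(o)$ (resp. $B^{\rm saw}_+(o)$) is the set of $\mathbf w\in\overline T$ such that $1/3$ (resp. $2/3$) is periodic under $S_{\mathbf w}$ with orbit of order type $o$. *)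

theory Defs
  imports "HOL-Analysis.Analysis"
begin

text \<open>Closed triangle T-bar in coordinates (w1,w2) = (fst w, snd w).\<close>
definition Tbar :: "(real \<times> real) set" where
  "Tbar = {w. 1 \<ge> fst w \<and> fst w \<ge> snd w \<and> snd w \<ge> 0}"

definition edges_T :: "(real \<times> real) set set" where
  "edges_T = {{w \<in> Tbar. fst w = 1}, {w \<in> Tbar. snd w = 0}, {w \<in> Tbar. fst w = snd w}}"

definition saw :: "real \<times> real \<Rightarrow> real \<Rightarrow> real" where
  "saw w x =
     (if x \<le> 1/3 then min (3*x) (fst w)
      else if x \<le> 2/3 then min (fst w) (max (snd w) (2 - 3*x))
      else max (3*x - 2) (snd w))"

definition cyclic_perm :: "nat \<Rightarrow> (nat \<Rightarrow> nat) \<Rightarrow> bool" where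
  "cyclic_perm p \<sigma> \<longleftrightarrow> \<sigma> permutes {1..p} \<and> (\<forall>i\<in>{1..p}. \<exists>k. (\<sigma> ^^ k) 1 = i)"

text \<open>x is periodic under g with exact period p, and its orbit x_1 < ... < x_p
  satisfies g(x_i) = x_{o(i)}.\<close>
definition periodic_order_type ::
    "(real \<Rightarrow> real) \<Rightarrow> real \<Rightarrow> nat \<Rightarrow> (nat \<Rightarrow> nat) \<Rightarrow> bool" where
  "periodic_order_type g x p \<sigma> \<longleftrightarrow>
     p \<ge> 1 \<and> (g ^^ p) x = x \<and> (\<forall>k\<in>{1..<p}. (g ^^ k) x \<noteq> x) \<and>
     (let xs = sorted_list_of_set ((\<lambda>k. (g ^^ k) x) ` {..<p})
      in \<forall>i\<in>{1..p}. g (xs ! (i - 1)) = xs ! (\<sigma> i - 1))"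

definition bone_minus :: "nat \<Rightarrow> (nat \<Rightarrow> nat) \<Rightarrow> (real \<times> real) set" where
  "bone_minus p \<sigma> = {w \<in> Tbar. periodic_order_type (saw w) (1/3) p \<sigma>}"

definition bone_plus :: "nat \<Rightarrow> (nat \<Rightarrow> nat) \<Rightarrow> (real \<times> real) set" where
  "bone_plus p \<sigma> = {w \<in> Tbar. periodic_order_type (saw w) (2/3) p \<sigma>}"

definition staircase_arc :: "(real \<times> real) set \<Rightarrow> bool" where
  "staircase_arc B \<longleftrightarrow>
     (\<exists>a b c d. a \<noteq> b \<and> b \<noteq> c \<and> c \<noteq> d \<and>
        ((snd a = snd b \<and> fst b = fst c \<and> snd c = snd d) \<or>
         (fst a = fst b \<and> snd b = snd c \<and> fst c = fst d)) \<and>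
        arc (linepath a b +++ linepath b c +++ linepath c d) \<and>
        B = path_image (linepath a b +++ linepath b c +++ linepath c d) \<and>
        (\<exists>E\<in>edges_T. a \<in> E \<and> d \<in> E))"

definition crosses_transversally_at ::
    "(real \<times> real) set \<Rightarrow> (real \<times> real) set \<Rightarrow> real \<times> real \<Rightarrow> bool" where
  "crosses_transversally_at A B x \<longleftrightarrow>
     (\<exists>e>0.
        (A \<inter> ball x e = {y \<in> ball x e \<inter> Tbar. snd y = snd x} \<and>
         B \<inter> ball x e = {y \<in> ball x e \<inter> Tbar. fst y = fst x}) \<or>
        (A \<inter> ball x e = {y \<in> ball x e \<inter> Tbar. fst y = fst x} \<and>
         B \<inter> ball x e = {y \<in> ball x e \<inter> Tbar. snd y = snd x}))"

end

(*
  For w in B_-(o) the orbit x_t of 1/3 under S_w is largest at x_1 = w_1, and all parameters of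
  the bone share the order pattern of this orbit, hence also the lap of S_w on which each x_t
  lies and the time j at which the orbit lands on the lower plateau, always at the same height h.
  Away from time j the orbit is a composition of affine laps, so x_j is a nonconstant affine
  function of w_1. The bone therefore consists of the horizontal segment w_2 = h on which x_j
  lies on the plateau [(2 - h)/3, (2 + h)/3], and of the two vertical segments below its ends,
  where x_j is an end of the plateau and w_2 can be lowered freely: an arch standing on the edge
  w_2 = 0. That the whole horizontal segment belongs to the bone is a connectedness argument: the
  strict order conditions are open, and at a limit point a collision of orbit points would force
  an early return to 1/3.

  Conjugation by x -> 1 - x exchanges the two critical points, so B_+(o) is the image of an arch
  under w -> (1 - w_2, 1 - w_1): a bracket standing on the edge w_1 = 1. The arch and the bracket
  can meet only where a leg crosses an arm, or where the top crosses the back; the latter point is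
  the parameter whose two critical orbits coincide, and its presence or absence compensates the
  parity of the corner crossings. For dual bones the parameter of B_-(o) whose critical orbit
  passes through 2/3 also lies in B_+(o) and is this central crossing.
*)

theory Submission
  imports Defs
begin

section \<open>Order types of periodic orbits\<close>

lemma sorted_list_of_set_nth_card_less:
  fixes A :: "'a::linorder set"
  assumes "finite A" "a \<in> A"
  shows "sorted_list_of_set A ! card {b\<in>A. b < a} = a"
proof -
  define xs where "xs = sorted_list_of_set A"
  have xs: "sorted_wrt (<) xs" "set xs = A" "distinct xs"
    using assms by (auto simp: xs_def)
  obtain i where i: "i < length xs" "xs ! i = a"
    using xs(2) assms(2) by (metis in_set_conv_nth)
  have "{b\<in>A. b < a} = (!) xs ` {..<i}"
  proof (intro equalityI subsetI)
    fix b assume b: "b \<in> {b\<in>A. b < a}"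
    then obtain k where k: "k < length xs" "xs ! k = b"
      using xs(2) by (metis (no_types, lifting) in_set_conv_nth mem_Collect_eq)
    have "k < i"
      using b i k xs(1) by (metis leI mem_Collect_eq order.asym order_le_less sorted_wrt_nth_less)
    then show "b \<in> (!) xs ` {..<i}" using k by auto
  qed (use xs i in \<open>auto intro: sorted_wrt_nth_less\<close>)
  moreover have "inj_on ((!) xs) {..<i}"
    using xs(3) i by (simp add: inj_on_def nth_eq_iff_index_eq)
  ultimately show ?thesis
    using i by (simp add: card_image xs_def)
qed

definition rank :: "(nat \<Rightarrow> 'a::linorder) \<Rightarrow> nat \<Rightarrow> nat \<Rightarrow> nat" where
  "rank y p t = card {s. s < p \<and> y s < y t}"

lemma sorted_list_of_set_image_nth_rank:
  assumes "inj_on y {..<p}" "t < p"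
  shows "sorted_list_of_set (y ` {..<p}) ! rank y p t = y t"
proof -
  have "{b \<in> y ` {..<p}. b < y t} = y ` {s. s < p \<and> y s < y t}" by auto
  moreover have "inj_on y {s. s < p \<and> y s < y t}" using assms(1) by (rule inj_on_subset) auto
  ultimately have "card {b \<in> y ` {..<p}. b < y t} = rank y p t"
    by (simp add: rank_def card_image)
  then show ?thesis
    using sorted_list_of_set_nth_card_less[of "y ` {..<p}" "y t"] assms(2) by simp
qed

lemma rank_less: "t < p \<Longrightarrow> rank y p t < p"
proof -
  assume "t < p"
  then have "rank y p t \<le> card ({..<p} - {t})"
    unfolding rank_def by (intro card_mono) auto
  with \<open>t < p\<close> show ?thesis by simp
qed

lemma rank_less_iff:
  assumes "inj_on y {..<p}" "s < p" "t < p"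
  shows "rank y p s < rank y p t \<longleftrightarrow> y s < y t"
proof
  assume "y s < y t"
  then have "{r. r < p \<and> y r < y s} \<subset> {r. r < p \<and> y r < y t}"
    using assms by auto
  then show "rank y p s < rank y p t"
    unfolding rank_def by (intro psubset_card_mono) auto
next
  assume "rank y p s < rank y p t"
  moreover have "\<not> y s < y t \<Longrightarrow> rank y p t \<le> rank y p s"
    unfolding rank_def by (intro card_mono) auto
  ultimately show "y s < y t" by linarith
qed

lemma rank_reflect:
  fixes y :: "nat \<Rightarrow> real"
  assumes inj: "inj_on y {..<p}" and t: "t < p"
  shows "rank (\<lambda>k. 1 - y k) p t = p - 1 - rank y p t"
proof -
  have "{..<p} = {s. s < p \<and> y s < y t} \<union> {t} \<union> {s. s < p \<and> y t < y s}"
  proof (intro equalityI subsetI)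
    fix s assume "s \<in> {..<p}"
    then have "s \<noteq> t \<Longrightarrow> y s \<noteq> y t" using inj t by (auto simp: inj_on_def)
    with \<open>s \<in> {..<p}\<close> show "s \<in> {s. s < p \<and> y s < y t} \<union> {t} \<union> {s. s < p \<and> y t < y s}"
      by (auto simp: neq_iff)
  qed (use t in auto)
  then have "p = card ({s. s < p \<and> y s < y t} \<union> {t} \<union> {s. s < p \<and> y t < y s})"
    by (metis card_lessThan)
  also have "\<dots> = rank y p t + 1 + card {s. s < p \<and> y t < y s}"
    unfolding rank_def by (subst card_Un_disjoint; auto)+
  finally have "p = rank y p t + 1 + card {s. s < p \<and> y t < y s}" .
  moreover have "rank (\<lambda>k. 1 - y k) p t = card {s. s < p \<and> y t < y s}"
    unfolding rank_def by simp
  ultimately show ?thesis by simp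
qed

lemma funpow_period_mult:
  assumes "(g ^^ p) x = x"
  shows "(g ^^ (p * n + k)) x = (g ^^ k) x"
proof -
  have "(g ^^ (p * n)) x = x"
    by (induction n) (simp_all add: funpow_add assms)
  then show ?thesis
    by (simp add: funpow_add add.commute)
qed

lemma Suc_mod_inj: "s < p \<Longrightarrow> t < p \<Longrightarrow> Suc s mod p = Suc t mod p \<Longrightarrow> s = t"
  by (auto simp: mod_Suc split: if_splits)

lemma periodic_orbit_image:
  assumes "(g ^^ p) x = x" "0 < p"
  shows "(\<lambda>k. (g ^^ k) x) ` {..<p} = range (\<lambda>k. (g ^^ k) x)"
  using assms funpow_mod_eq[where f = g and n = p and x = x]
  by (auto intro!: image_eqI[where x = "_ mod p"])

lemma periodic_point_in_orbit:
  assumes "(g ^^ q) z = z" "0 < q" "(g ^^ m) x = (g ^^ n) z"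
  shows "z \<in> range (\<lambda>k. (g ^^ k) x)"
proof -
  have "q * n - n + n = q * n" using assms(2) by simp
  then have "z = (g ^^ (q * n - n + n)) z"
    using funpow_period_mult[OF assms(1), of n 0] by simp
  also have "\<dots> = (g ^^ (q * n - n + m)) x"
    by (simp add: funpow_add assms(3))
  finally show ?thesis by blast
qed

lemma periodic_order_typeD:
  assumes "periodic_order_type g x p \<sigma>"
  shows "p \<ge> 1" "(g ^^ p) x = x" "\<forall>k\<in>{1..<p}. (g ^^ k) x \<noteq> x"
  using assms unfolding periodic_order_type_def by auto

lemma inj_on_periodic_orbit:
  assumes "(g ^^ p) x = x" "\<forall>k\<in>{1..<p}. (g ^^ k) x \<noteq> x"
  shows "inj_on (\<lambda>k. (g ^^ k) x) {..<p}"
  using inj_on_funpow_least[where f = g and n = p and s = x] assms by (auto simp: atLeast0LessThan)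

text \<open>In the notation \<open>x\<^sub>1 < \<dots> < x\<^sub>p\<close> of the order type, \<open>(g ^^ t) x\<close> is \<open>x\<^bsub>rank + 1\<^esub>\<close>.\<close>
lemma periodic_order_type_iff_rank:
  fixes g :: "real \<Rightarrow> real"
  assumes p: "p \<ge> 1" and per: "(g ^^ p) x = x" and exact: "\<forall>k\<in>{1..<p}. (g ^^ k) x \<noteq> x"
    and \<sigma>: "\<sigma> ` {1..p} \<subseteq> {1..p}"
  shows "periodic_order_type g x p \<sigma> \<longleftrightarrow>
    (\<forall>t<p. \<sigma> (rank (\<lambda>k. (g ^^ k) x) p t + 1) = rank (\<lambda>k. (g ^^ k) x) p (Suc t mod p) + 1)"
proof -
  define y where "y = (\<lambda>k. (g ^^ k) x)"
  define xs where "xs = sorted_list_of_set (y ` {..<p})"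
  have inj: "inj_on y {..<p}"
    unfolding y_def using inj_on_periodic_orbit[OF per exact] .
  have len: "length xs = p" and dist: "distinct xs" and set_xs: "set xs = y ` {..<p}"
    using inj by (simp_all add: xs_def card_image)
  have nth_rank: "xs ! rank y p t = y t" if "t < p" for t
    using sorted_list_of_set_image_nth_rank[OF inj that] by (simp add: xs_def)
  have g_y: "g (y t) = y (Suc t mod p)" for t
    unfolding y_def using funpow_mod_eq[OF per, of "Suc t"] by simp
  have rank_Suc: "rank y p (Suc t mod p) < p" for t
    using p by (intro rank_less) simp
  have "periodic_order_type g x p \<sigma> \<longleftrightarrow> (\<forall>i\<in>{1..p}. g (xs ! (i - 1)) = xs ! (\<sigma> i - 1))"
    unfolding periodic_order_type_def Let_def xs_def y_def using p per exact by auto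
  also have "\<dots> \<longleftrightarrow> (\<forall>t<p. \<sigma> (rank y p t + 1) = rank y p (Suc t mod p) + 1)"
  proof (intro iffI allI impI ballI)
    fix t assume H: "\<forall>i\<in>{1..p}. g (xs ! (i - 1)) = xs ! (\<sigma> i - 1)" and t: "t < p"
    have i: "rank y p t + 1 \<in> {1..p}" using rank_less[OF t, where y = y] by simp
    then have "\<sigma> (rank y p t + 1) \<in> {1..p}" using \<sigma> by blast
    then have lt: "\<sigma> (rank y p t + 1) - 1 < length xs" using len by auto
    have "xs ! (\<sigma> (rank y p t + 1) - 1) = g (y t)"
      using H i nth_rank[OF t] by fastforce
    also have "\<dots> = xs ! rank y p (Suc t mod p)"
      using g_y nth_rank[of "Suc t mod p"] p by simp
    finally have "\<sigma> (rank y p t + 1) - 1 = rank y p (Suc t mod p)"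
      using nth_eq_iff_index_eq[OF dist lt, of "rank y p (Suc t mod p)"] len rank_Suc by simp
    then show "\<sigma> (rank y p t + 1) = rank y p (Suc t mod p) + 1"
      using \<open>\<sigma> (rank y p t + 1) \<in> {1..p}\<close> by (simp add: le_imp_diff_is_add)
  next
    fix i assume H: "\<forall>t<p. \<sigma> (rank y p t + 1) = rank y p (Suc t mod p) + 1" and i: "i \<in> {1..p}"
    then have "xs ! (i - 1) \<in> y ` {..<p}" using len set_xs by (auto simp flip: set_xs)
    then obtain t where t: "t < p" "xs ! (i - 1) = y t" by auto
    have "xs ! rank y p t = xs ! (i - 1)" using nth_rank[OF t(1)] t(2) by simp
    then have "rank y p t = i - 1"
      using nth_eq_iff_index_eq[OF dist, of "rank y p t" "i - 1"] len i rank_less[OF t(1), where y = y]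
      by auto
    then have "\<sigma> i - 1 = rank y p (Suc t mod p)"
      using H t(1) i by (metis add_diff_cancel_right' atLeastAtMost_iff le_add_diff_inverse2)
    then show "g (xs ! (i - 1)) = xs ! (\<sigma> i - 1)"
      using t(2) g_y nth_rank[of "Suc t mod p"] p by simp
  qed
  finally show ?thesis unfolding y_def .
qed

lemma periodic_order_type_transfer:
  fixes g g' :: "real \<Rightarrow> real"
  assumes pot: "periodic_order_type g x p \<sigma>" and \<sigma>: "\<sigma> ` {1..p} \<subseteq> {1..p}"
    and per': "(g' ^^ p) x' = x'"
    and same_order: "\<And>s t. s < p \<Longrightarrow> t < p \<Longrightarrow> (g ^^ s) x < (g ^^ t) x \<longleftrightarrow> (g' ^^ s) x' < (g' ^^ t) x'"
  shows "periodic_order_type g' x' p \<sigma>"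
proof -
  note pd = periodic_order_typeD[OF pot]
  have inj: "inj_on (\<lambda>k. (g ^^ k) x) {..<p}" using inj_on_periodic_orbit[OF pd(2,3)] .
  have "(g' ^^ s) x' \<noteq> (g' ^^ t) x'" if "s < p" "t < p" "s \<noteq> t" for s t
  proof -
    have "(g ^^ s) x \<noteq> (g ^^ t) x" using inj that by (auto simp: inj_on_def)
    then show ?thesis using same_order[OF that(1,2)] same_order[OF that(2,1)] by auto
  qed
  from this[of _ 0] have exact': "\<forall>k\<in>{1..<p}. (g' ^^ k) x' \<noteq> x'"
    by auto
  have "rank (\<lambda>k. (g ^^ k) x) p t = rank (\<lambda>k. (g' ^^ k) x') p t" if "t < p" for t
    unfolding rank_def using same_order that by (metis (no_types, lifting) Collect_cong)
  then show ?thesis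
    using pot periodic_order_type_iff_rank[OF pd \<sigma>] periodic_order_type_iff_rank[OF pd(1) per' exact' \<sigma>]
      pd(1) by simp
qed

lemma periodic_order_type_funpow:
  assumes pot: "periodic_order_type g x p \<sigma>"
  shows "periodic_order_type g ((g ^^ j) x) p \<sigma>"
proof -
  note pd = periodic_order_typeD[OF pot]
  have shift: "(g ^^ k) ((g ^^ j) x) = (g ^^ (k + j)) x" for k
    by (simp add: funpow_add)
  have j_le: "p * j - j + j = p * j"
    using pd(1) by (simp add: le_add_diff_inverse2)
  have per: "(g ^^ p) ((g ^^ j) x) = (g ^^ j) x"
    using funpow_period_mult[OF pd(2), of 1 j] by (simp add: shift add.commute)
  have exact: "\<forall>k\<in>{1..<p}. (g ^^ k) ((g ^^ j) x) \<noteq> (g ^^ j) x"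
  proof (intro ballI notI)
    fix k assume k: "k \<in> {1..<p}" and eq: "(g ^^ k) ((g ^^ j) x) = (g ^^ j) x"
    have "(g ^^ k) x = (g ^^ (p * j + k)) x"
      using funpow_period_mult[OF pd(2)] by simp
    also have "\<dots> = (g ^^ (p * j - j + (k + j))) x"
      by (rule arg_cong[where f = "\<lambda>n. (g ^^ n) x"]) (use j_le in linarith)
    also have "\<dots> = (g ^^ (p * j - j)) ((g ^^ k) ((g ^^ j) x))"
      by (simp add: funpow_add)
    also have "\<dots> = (g ^^ (p * j - j + j)) x"
      by (simp add: eq funpow_add)
    also have "\<dots> = (g ^^ (p * j)) x"
      by (simp only: j_le)
    also have "\<dots> = x"
      using funpow_period_mult[OF pd(2), of j 0] by simp
    finally show False using pd(3) k by blast
  qed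
  have "range (\<lambda>k. (g ^^ k) ((g ^^ j) x)) = range (\<lambda>k. (g ^^ k) x)"
  proof (intro equalityI subsetI)
    fix z assume "z \<in> range (\<lambda>k. (g ^^ k) x)"
    then obtain m where "z = (g ^^ (p * j + m)) x"
      using funpow_period_mult[OF pd(2)] by auto
    also have "p * j + m = (p * j - j + m) + j"
      using j_le by simp
    finally show "z \<in> range (\<lambda>k. (g ^^ k) ((g ^^ j) x))"
      by (simp add: shift)
  qed (auto simp: shift)
  then have same_set: "(\<lambda>k. (g ^^ k) ((g ^^ j) x)) ` {..<p} = (\<lambda>k. (g ^^ k) x) ` {..<p}"
    using periodic_orbit_image[OF per] periodic_orbit_image[OF pd(2)] pd(1) by simp
  show ?thesis
    using pot per exact pd(1) unfolding periodic_order_type_def same_set by simp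
qed

definition rev_perm :: "nat \<Rightarrow> (nat \<Rightarrow> nat) \<Rightarrow> nat \<Rightarrow> nat" where
  "rev_perm p \<sigma> i = p + 1 - \<sigma> (p + 1 - i)"

lemma rev_perm_into: "\<sigma> ` {1..p} \<subseteq> {1..p} \<Longrightarrow> rev_perm p \<sigma> ` {1..p} \<subseteq> {1..p}"
proof -
  assume \<sigma>: "\<sigma> ` {1..p} \<subseteq> {1..p}"
  have "\<sigma> (p + 1 - i) \<in> {1..p}" if "i \<in> {1..p}" for i
  proof -
    have "p + 1 - i \<in> {1..p}" using that by auto
    then show ?thesis using \<sigma> by blast
  qed
  then show ?thesis unfolding rev_perm_def by force
qed

lemma rev_perm_rev_perm: "\<sigma> ` {1..p} \<subseteq> {1..p} \<Longrightarrow> i \<in> {1..p} \<Longrightarrow> rev_perm p (rev_perm p \<sigma>) i = \<sigma> i"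
  unfolding rev_perm_def by force

lemma periodic_order_type_cong:
  "(\<And>i. i \<in> {1..p} \<Longrightarrow> \<sigma> i = \<tau> i) \<Longrightarrow> periodic_order_type g x p \<sigma> = periodic_order_type g x p \<tau>"
  unfolding periodic_order_type_def Let_def by auto

text \<open>Conjugating by the reflection \<open>x \<mapsto> 1 - x\<close> reverses the order of the orbit.\<close>
lemma periodic_order_type_reflect:
  fixes g g' :: "real \<Rightarrow> real"
  assumes rel: "\<And>k. (g' ^^ k) x' = 1 - (g ^^ k) x" and \<sigma>: "\<sigma> ` {1..p} \<subseteq> {1..p}"
    and pot: "periodic_order_type g x p \<sigma>"
  shows "periodic_order_type g' x' p (rev_perm p \<sigma>)"
proof -
  note pd = periodic_order_typeD[OF pot]
  define y where "y = (\<lambda>k. (g ^^ k) x)"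
  have x': "x' = 1 - x" using rel[of 0] by simp
  have per: "(g' ^^ p) x' = x'" using rel[of p] pd(2) x' by simp
  have exact: "\<forall>k\<in>{1..<p}. (g' ^^ k) x' \<noteq> x'" using rel pd(3) x' by auto
  have inj: "inj_on y {..<p}" unfolding y_def using inj_on_periodic_orbit[OF pd(2,3)] .
  have y': "(\<lambda>k. (g' ^^ k) x') = (\<lambda>k. 1 - y k)" using rel y_def by auto
  have C: "\<sigma> (rank y p t + 1) = rank y p (Suc t mod p) + 1" if "t < p" for t
    using periodic_order_type_iff_rank[OF pd \<sigma>] pot that unfolding y_def by blast
  have "rev_perm p \<sigma> (rank (\<lambda>k. 1 - y k) p t + 1) = rank (\<lambda>k. 1 - y k) p (Suc t mod p) + 1"
    if t: "t < p" for t
  proof -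
    have m: "Suc t mod p < p" using pd(1) by simp
    have "rank y p t < p" "rank y p (Suc t mod p) < p" using rank_less[OF t, where y = y] rank_less[OF m, where y = y] by auto
    then show ?thesis
      unfolding rev_perm_def rank_reflect[OF inj t] rank_reflect[OF inj m] using C[OF t] by simp
  qed
  then show ?thesis
    using periodic_order_type_iff_rank[OF pd(1) per exact rev_perm_into[OF \<sigma>]] y' by simp
qed

section \<open>The stunted sawtooth map\<close>

lemma Tbar_iff: "w \<in> Tbar \<longleftrightarrow> fst w \<le> 1 \<and> snd w \<le> fst w \<and> 0 \<le> snd w"
  by (auto simp: Tbar_def)

lemma saw_one_third: "w \<in> Tbar \<Longrightarrow> saw w (1/3) = fst w"
  by (simp add: saw_def Tbar_iff)

lemma saw_two_thirds: "w \<in> Tbar \<Longrightarrow> saw w (2/3) = snd w"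
  by (simp add: saw_def Tbar_iff)

lemma saw_nonneg: "w \<in> Tbar \<Longrightarrow> 0 \<le> x \<Longrightarrow> 0 \<le> saw w x"
  by (auto simp: saw_def Tbar_iff)

lemma funpow_saw_zero: "w \<in> Tbar \<Longrightarrow> (saw w ^^ k) 0 = 0"
  by (induction k) (auto simp: saw_def Tbar_iff)

lemma funpow_saw_ge_one: "1 \<le> x \<Longrightarrow> 1 \<le> (saw w ^^ k) x"
  by (induction k) (auto simp: saw_def)

lemma saw_ge_snd: "w \<in> Tbar \<Longrightarrow> 1/3 \<le> x \<Longrightarrow> snd w \<le> saw w x"
  by (simp add: saw_def Tbar_iff)

lemma saw_le_fst: "w \<in> Tbar \<Longrightarrow> x \<le> 2/3 \<Longrightarrow> saw w x \<le> fst w"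
  by (simp add: saw_def Tbar_iff)

lemma saw_left: "w \<in> Tbar \<Longrightarrow> x \<le> 1/3 \<Longrightarrow> saw w x \<noteq> fst w \<Longrightarrow> saw w x = 3 * x"
  by (auto simp: saw_def Tbar_iff min_def split: if_splits)

lemma saw_middle:
  "w \<in> Tbar \<Longrightarrow> 1/3 < x \<Longrightarrow> x \<le> 2/3 \<Longrightarrow> saw w x \<noteq> fst w \<Longrightarrow> saw w x = max (snd w) (2 - 3 * x)"
  by (auto simp: saw_def Tbar_iff min_def)

lemma saw_right: "2/3 < x \<Longrightarrow> saw w x = max (3 * x - 2) (snd w)"
  by (simp add: saw_def)

text \<open>For \<open>w = (a, b)\<close> with \<open>b \<le> h \<le> a\<close>, the map agrees with one of its three affine laps on each of
  the following intervals; between the middle and right ones lies the plateau of height \<open>h\<close>.\<close>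

datatype lap = Left | Middle | Right

fun lap_map :: "lap \<Rightarrow> real \<Rightarrow> real" where
  "lap_map Left x = 3 * x"
| "lap_map Middle x = 2 - 3 * x"
| "lap_map Right x = 3 * x - 2"

fun lap_interval :: "real \<Rightarrow> real \<Rightarrow> lap \<Rightarrow> real set" where
  "lap_interval a h Left = {..a/3}"
| "lap_interval a h Middle = {(2 - a)/3..(2 - h)/3}"
| "lap_interval a h Right = {(2 + h)/3..}"

fun lap_interior :: "real \<Rightarrow> real \<Rightarrow> lap \<Rightarrow> real set" where
  "lap_interior a h Left = {..<a/3}"
| "lap_interior a h Middle = {(2 - a)/3<..<(2 - h)/3}"
| "lap_interior a h Right = {(2 + h)/3<..}"

lemma lap_interior_subset: "lap_interior a h l \<subseteq> lap_interval a h l"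
  by (cases l) auto

lemma lap_interval_minus_ends:
  "x \<in> lap_interval a h l \<Longrightarrow> x \<notin> {a/3, (2 - a)/3, (2 - h)/3, (2 + h)/3} \<Longrightarrow> x \<in> lap_interior a h l"
  by (cases l) auto

lemma lap_map_inj: "lap_map l x = lap_map l x' \<Longrightarrow> x = x'"
  by (cases l) auto

lemma lap_map_affine: "\<exists>c d. c \<noteq> 0 \<and> (\<forall>x. lap_map l x = c * x + d)"
  by (cases l) (auto intro: exI[of _ 3] exI[of _ "-3"])

lemma saw_lap:
  assumes "x \<in> lap_interval a h l" "b \<le> h" "0 < h" "h \<le> a" "a \<le> 1"
  shows "saw (a, b) x = lap_map l x"
  using assms by (cases l) (auto simp: saw_def field_simps)

lemma saw_plateau:
  assumes "x \<in> {(2 - h)/3..(2 + h)/3}" "0 < h" "h \<le> a" "h < 1"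
  shows "saw (a, h) x = h"
  using assms by (auto simp: saw_def field_simps)

lemma saw_plateau_end:
  assumes "x = (2 - h)/3 \<or> x = (2 + h)/3" "0 \<le> b" "b \<le> h" "0 < h" "h \<le> a" "h < 1"
  shows "saw (a, b) x = h"
  using assms by (auto simp: saw_def field_simps)

lemma saw_lap_top:
  assumes "x = a/3 \<or> x = (2 - a)/3" "0 \<le> b" "b \<le> a" "a \<le> 1"
  shows "saw (a, b) x = a"
  using assms by (auto simp: saw_def field_simps)

definition orb :: "real \<times> real \<Rightarrow> nat \<Rightarrow> real" where
  "orb w t = (saw w ^^ t) (1/3)"

lemma orb_0 [simp]: "orb w 0 = 1/3"
  by (simp add: orb_def)

lemma orb_Suc: "orb w (Suc t) = saw w (orb w t)"
  by (simp add: orb_def)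

lemma orb_1: "w \<in> Tbar \<Longrightarrow> orb w 1 = fst w"
  by (simp add: orb_def saw_one_third)

lemma orb_add: "orb w (k + t) = (saw w ^^ k) (orb w t)"
  by (simp add: orb_def funpow_add)

definition reflect :: "real \<times> real \<Rightarrow> real \<times> real" where
  "reflect w = (1 - snd w, 1 - fst w)"

lemma reflect_reflect [simp]: "reflect (reflect w) = w"
  by (simp add: reflect_def)

lemma reflect_Tbar: "w \<in> Tbar \<Longrightarrow> reflect w \<in> Tbar"
  by (simp add: reflect_def Tbar_iff)

lemma saw_reflect: "w \<in> Tbar \<Longrightarrow> saw (reflect w) (1 - x) = 1 - saw w x"
  by (cases "x < 1/3"; cases "x \<le> 1/3"; cases "x < 2/3"; cases "x \<le> 2/3")
    (auto simp: saw_def reflect_def Tbar_iff min_def max_def)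

lemma funpow_saw_reflect: "w \<in> Tbar \<Longrightarrow> (saw (reflect w) ^^ k) (1 - x) = 1 - (saw w ^^ k) x"
  by (induction k) (simp_all add: saw_reflect[symmetric])

lemma bone_plus_iff_reflect:
  assumes \<sigma>: "\<sigma> ` {1..p} \<subseteq> {1..p}"
  shows "w \<in> bone_plus p \<sigma> \<longleftrightarrow> reflect w \<in> bone_minus p (rev_perm p \<sigma>)"
proof
  assume "w \<in> bone_plus p \<sigma>"
  then have T: "w \<in> Tbar" and pot: "periodic_order_type (saw w) (2/3) p \<sigma>"
    by (auto simp: bone_plus_def)
  have "(saw (reflect w) ^^ k) (1/3) = 1 - (saw w ^^ k) (2/3)" for k
    using funpow_saw_reflect[OF T, of k "2/3"] by simp
  from periodic_order_type_reflect[OF this \<sigma> pot] reflect_Tbar[OF T]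
  show "reflect w \<in> bone_minus p (rev_perm p \<sigma>)" by (simp add: bone_minus_def)
next
  assume "reflect w \<in> bone_minus p (rev_perm p \<sigma>)"
  then have T: "reflect w \<in> Tbar" and pot: "periodic_order_type (saw (reflect w)) (1/3) p (rev_perm p \<sigma>)"
    by (auto simp: bone_minus_def)
  have "(saw w ^^ k) (2/3) = 1 - (saw (reflect w) ^^ k) (1/3)" for k
    using funpow_saw_reflect[OF T, of k "1/3"] by simp
  from periodic_order_type_reflect[OF this rev_perm_into[OF \<sigma>] pot]
  have "periodic_order_type (saw w) (2/3) p \<sigma>"
    using periodic_order_type_cong[of p "rev_perm p (rev_perm p \<sigma>)" \<sigma>] rev_perm_rev_perm[OF \<sigma>] by blast
  with reflect_Tbar[OF T] show "w \<in> bone_plus p \<sigma>" by (simp add: bone_plus_def)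
qed

section \<open>Arches and brackets\<close>

definition arch :: "real \<Rightarrow> real \<Rightarrow> real \<Rightarrow> (real \<times> real) set" where
  "arch a1 a2 h = {a1, a2} \<times> {0..h} \<union> {a1..a2} \<times> {h}"

definition bracket :: "real \<Rightarrow> real \<Rightarrow> real \<Rightarrow> (real \<times> real) set" where
  "bracket b h1 h2 = {b..1} \<times> {h1, h2} \<union> {b} \<times> {h1..h2}"

lemma reflect_arch: "reflect ` arch a1 a2 h = bracket (1 - h) (1 - a2) (1 - a1)"
proof -
  have "reflect ` arch a1 a2 h \<subseteq> bracket (1 - h) (1 - a2) (1 - a1)"
    by (auto simp: arch_def bracket_def reflect_def)
  moreover have "w \<in> reflect ` arch a1 a2 h" if "w \<in> bracket (1 - h) (1 - a2) (1 - a1)" for w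
    using that by (intro image_eqI[of w reflect "reflect w"]) (auto simp: arch_def bracket_def reflect_def)
  ultimately show ?thesis by blast
qed

lemma closed_segment_vertical: "closed_segment (x, y1) (x, y2) = {x} \<times> closed_segment y1 (y2::real)"
  by (auto simp: in_segment prod_eq_iff algebra_simps)

lemma closed_segment_horizontal: "closed_segment (x1, y) (x2, y) = closed_segment x1 (x2::real) \<times> {y}"
  by (auto simp: in_segment prod_eq_iff algebra_simps)

lemma staircase_arcI:
  assumes ne: "a \<noteq> b" "b \<noteq> c" "c \<noteq> d"
    and axes: "(snd a = snd b \<and> fst b = fst c \<and> snd c = snd d) \<or> (fst a = fst b \<and> snd b = snd c \<and> fst c = fst d)"
    and meet: "closed_segment a b \<inter> closed_segment b c \<subseteq> {b}" "closed_segment b c \<inter> closed_segment c d \<subseteq> {c}"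
      "closed_segment a b \<inter> closed_segment c d = {}"
    and edge: "E \<in> edges_T" "a \<in> E" "d \<in> E"
  shows "staircase_arc (closed_segment a b \<union> closed_segment b c \<union> closed_segment c d)"
proof -
  let ?g = "linepath a b +++ linepath b c +++ linepath c d"
  have tail: "arc (linepath b c +++ linepath c d)"
    using arc_join[OF arc_linepath[OF ne(2)] arc_linepath[OF ne(3)]] meet(2) by simp
  have "closed_segment a b \<inter> path_image (linepath b c +++ linepath c d) \<subseteq> {b}"
    using meet(1,3) by (auto simp: path_image_join)
  then have "arc ?g"
    using arc_join[OF arc_linepath[OF ne(1)] tail] by simp
  moreover have "path_image ?g = closed_segment a b \<union> closed_segment b c \<union> closed_segment c d"
    by (simp add: path_image_join Un_assoc)
  ultimately show ?thesis
    unfolding staircase_arc_def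
    by (intro exI[of _ a] exI[of _ b] exI[of _ c] exI[of _ d] conjI bexI[of _ E])
      (use ne axes edge in simp_all)
qed

lemma staircase_arc_arch:
  assumes "0 < h" "0 \<le> a1" "a1 < a2" "a2 \<le> 1"
  shows "staircase_arc (arch a1 a2 h)"
proof -
  have segs: "closed_segment (a1, 0) (a1, h) = {a1} \<times> {0..h}" "closed_segment (a1, h) (a2, h) = {a1..a2} \<times> {h}"
    "closed_segment (a2, h) (a2, 0) = {a2} \<times> {0..h}"
    using assms by (simp_all add: closed_segment_vertical closed_segment_horizontal closed_segment_eq_real_ivl)
  have "staircase_arc (closed_segment (a1, 0) (a1, h) \<union> closed_segment (a1, h) (a2, h) \<union> closed_segment (a2, h) (a2, 0))"
    by (rule staircase_arcI[where E = "{w \<in> Tbar. snd w = 0}"])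
      (use assms in \<open>auto simp: segs edges_T_def Tbar_iff\<close>)
  moreover have "arch a1 a2 h = {a1} \<times> {0..h} \<union> {a1..a2} \<times> {h} \<union> {a2} \<times> {0..h}"
    by (auto simp: arch_def)
  ultimately show ?thesis by (simp only: segs)
qed

lemma staircase_arc_bracket:
  assumes "0 \<le> h1" "h1 < h2" "h2 \<le> 1" "b < 1"
  shows "staircase_arc (bracket b h1 h2)"
proof -
  have segs: "closed_segment (1, h1) (b, h1) = {b..1} \<times> {h1}" "closed_segment (b, h1) (b, h2) = {b} \<times> {h1..h2}"
    "closed_segment (b, h2) (1, h2) = {b..1} \<times> {h2}"
    using assms by (simp_all add: closed_segment_vertical closed_segment_horizontal closed_segment_eq_real_ivl)
  have "staircase_arc (closed_segment (1, h1) (b, h1) \<union> closed_segment (b, h1) (b, h2) \<union> closed_segment (b, h2) (1, h2))"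
    by (rule staircase_arcI[where E = "{w \<in> Tbar. fst w = 1}"])
      (use assms in \<open>auto simp: segs edges_T_def Tbar_iff\<close>)
  moreover have "bracket b h1 h2 = {b..1} \<times> {h1} \<union> {b} \<times> {h1..h2} \<union> {b..1} \<times> {h2}"
    by (auto simp: bracket_def)
  ultimately show ?thesis by (simp only: segs)
qed

lemma crosses_transversally_atI:
  assumes "A \<subseteq> Tbar" "C \<subseteq> Tbar"
    and A: "\<exists>e>0. \<forall>y \<in> ball x e \<inter> Tbar. y \<in> A \<longleftrightarrow> fst y = fst x"
    and C: "\<exists>e>0. \<forall>y \<in> ball x e \<inter> Tbar. y \<in> C \<longleftrightarrow> snd y = snd x"
  shows "crosses_transversally_at A C x" "crosses_transversally_at C A x"
proof -
  obtain e1 e2 where e: "0 < e1" "0 < e2"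
    and A': "\<forall>y \<in> ball x e1 \<inter> Tbar. y \<in> A \<longleftrightarrow> fst y = fst x"
    and C': "\<forall>y \<in> ball x e2 \<inter> Tbar. y \<in> C \<longleftrightarrow> snd y = snd x"
    using A C by blast
  define e where "e = min e1 e2"
  have "0 < e" "ball x e \<subseteq> ball x e1" "ball x e \<subseteq> ball x e2"
    using e by (auto simp: e_def)
  then have "A \<inter> ball x e = {y \<in> ball x e \<inter> Tbar. fst y = fst x}"
    "C \<inter> ball x e = {y \<in> ball x e \<inter> Tbar. snd y = snd x}"
    using A' C' assms(1,2) by blast+
  then show "crosses_transversally_at A C x" "crosses_transversally_at C A x"
    unfolding crosses_transversally_at_def using \<open>0 < e\<close> by blast+
qed

lemma dist_components_less: "y \<in> ball x e \<Longrightarrow> \<bar>fst y - fst x\<bar> < e \<and> \<bar>snd y - snd x\<bar> < e"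
  using dist_fst_le[of x y] dist_snd_le[of x y] by (simp add: dist_real_def abs_minus_commute)

lemma arch_near_leg:
  assumes "a1 < a2" "x \<in> {a1, a2}" "k < h"
  shows "\<exists>e>0. \<forall>y \<in> ball (x, k) e \<inter> Tbar. y \<in> arch a1 a2 h \<longleftrightarrow> fst y = x"
proof (intro exI[of _ "min (h - k) (a2 - a1)"] conjI ballI)
  fix y assume y: "y \<in> ball (x, k) (min (h - k) (a2 - a1)) \<inter> Tbar"
  then have "\<bar>fst y - x\<bar> < a2 - a1" "\<bar>snd y - k\<bar> < h - k" "0 \<le> snd y"
    using dist_components_less[of y "(x, k)"] by (auto simp: Tbar_iff)
  then show "y \<in> arch a1 a2 h \<longleftrightarrow> fst y = x"
    using assms by (auto simp: arch_def mem_Times_iff)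
qed (use assms in auto)

lemma arch_near_top:
  assumes "a1 < x" "x < a2"
  shows "\<exists>e>0. \<forall>y \<in> ball (x, h) e \<inter> Tbar. y \<in> arch a1 a2 h \<longleftrightarrow> snd y = h"
proof (intro exI[of _ "min (x - a1) (a2 - x)"] conjI ballI)
  fix y assume "y \<in> ball (x, h) (min (x - a1) (a2 - x)) \<inter> Tbar"
  then have "\<bar>fst y - x\<bar> < x - a1" "\<bar>fst y - x\<bar> < a2 - x"
    using dist_components_less[of y "(x, h)"] by auto
  then show "y \<in> arch a1 a2 h \<longleftrightarrow> snd y = h"
    using assms by (auto simp: arch_def mem_Times_iff)
qed (use assms in auto)

lemma bracket_near_arm:
  assumes "h1 < h2" "k \<in> {h1, h2}" "b < x"
  shows "\<exists>e>0. \<forall>y \<in> ball (x, k) e \<inter> Tbar. y \<in> bracket b h1 h2 \<longleftrightarrow> snd y = k"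
proof (intro exI[of _ "min (x - b) (h2 - h1)"] conjI ballI)
  fix y assume "y \<in> ball (x, k) (min (x - b) (h2 - h1)) \<inter> Tbar"
  then have "\<bar>fst y - x\<bar> < x - b" "\<bar>snd y - k\<bar> < h2 - h1" "fst y \<le> 1"
    using dist_components_less[of y "(x, k)"] by (auto simp: Tbar_iff)
  then show "y \<in> bracket b h1 h2 \<longleftrightarrow> snd y = k"
    using assms by (auto simp: bracket_def mem_Times_iff)
qed (use assms in auto)

lemma bracket_near_back:
  assumes "h1 < k" "k < h2"
  shows "\<exists>e>0. \<forall>y \<in> ball (b, k) e \<inter> Tbar. y \<in> bracket b h1 h2 \<longleftrightarrow> fst y = b"
proof (intro exI[of _ "min (k - h1) (h2 - k)"] conjI ballI)
  fix y assume "y \<in> ball (b, k) (min (k - h1) (h2 - k)) \<inter> Tbar"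
  then have "\<bar>snd y - k\<bar> < k - h1" "\<bar>snd y - k\<bar> < h2 - k"
    using dist_components_less[of y "(b, k)"] by auto
  then show "y \<in> bracket b h1 h2 \<longleftrightarrow> fst y = b"
    using assms by (auto simp: bracket_def mem_Times_iff)
qed (use assms in auto)

text \<open>The hypothesis excludes contacts at corners and ends: the curves may only meet where a leg
  crosses an arm or where the top crosses the back.\<close>
locale arch_bracket =
  fixes a1 a2 h b h1 h2 :: real
  assumes arch: "0 < h" "h < a1" "a1 < a2" "a2 < 1"
    and bracket: "0 < h1" "h1 < h2" "h2 < b" "b < 1"
    and crossing_cases: "\<And>w. w \<in> arch a1 a2 h \<inter> bracket b h1 h2 \<Longrightarrow>
      (w = (b, h) \<and> a1 < b \<and> b < a2 \<and> h1 < h \<and> h < h2) \<or>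
      (fst w \<in> {a1, a2} \<and> snd w \<in> {h1, h2} \<and> b < fst w \<and> snd w < h)"
begin

abbreviation "central \<equiv> a1 < b \<and> b < a2 \<and> h1 < h \<and> h < h2"

definition crossing_legs :: "real set" where
  "crossing_legs = {x \<in> {a1, a2}. b < x}"

definition crossing_arms :: "real set" where
  "crossing_arms = {y \<in> {h1, h2}. y < h}"

lemma crossing_legs_eq: "crossing_legs = (if b < a1 then {a1, a2} else if b < a2 then {a2} else {})"
  using arch by (auto simp: crossing_legs_def)

lemma crossing_arms_eq: "crossing_arms = (if h2 < h then {h1, h2} else if h1 < h then {h1} else {})"
  using bracket by (auto simp: crossing_arms_def)

lemma inter_eq:
  "arch a1 a2 h \<inter> bracket b h1 h2 = crossing_legs \<times> crossing_arms \<union> (if central then {(b, h)} else {})"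
proof (intro equalityI subsetI)
  fix w assume "w \<in> arch a1 a2 h \<inter> bracket b h1 h2"
  then show "w \<in> crossing_legs \<times> crossing_arms \<union> (if central then {(b, h)} else {})"
    using crossing_cases[of w] by (auto simp: crossing_legs_def crossing_arms_def mem_Times_iff)
next
  fix w assume "w \<in> crossing_legs \<times> crossing_arms \<union> (if central then {(b, h)} else {})"
  then show "w \<in> arch a1 a2 h \<inter> bracket b h1 h2"
    using arch bracket
    by (auto simp: crossing_legs_def crossing_arms_def arch_def bracket_def split: if_splits)
qed

text \<open>The centre is crossed exactly when one leg and one arm are: otherwise the arch would touch
  the bracket at a corner without crossing it.\<close>
lemma central_iff: "central \<longleftrightarrow> card crossing_legs = 1 \<and> card crossing_arms = 1"
proof -
  have no_touch_leg: "b \<noteq> a1" if "h1 < h"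
  proof
    assume "b = a1"
    then have "(a1, h1) \<in> arch a1 a2 h \<inter> bracket b h1 h2"
      using that arch bracket by (auto simp: arch_def bracket_def)
    then show False using crossing_cases \<open>b = a1\<close> that by fastforce
  qed
  have no_touch_arm: "h \<noteq> h2" if "a1 \<le> b" "b < a2"
  proof
    assume "h = h2"
    then have "(a2, h2) \<in> arch a1 a2 h \<inter> bracket b h1 h2"
      using that arch bracket by (auto simp: arch_def bracket_def)
    then show False using crossing_cases \<open>h = h2\<close> that by fastforce
  qed
  show ?thesis
    using no_touch_leg no_touch_arm arch bracket
    by (auto simp: crossing_legs_eq crossing_arms_eq)
qed

lemma finite_inter: "finite (arch a1 a2 h \<inter> bracket b h1 h2)"
  by (simp add: inter_eq crossing_legs_def crossing_arms_def)

lemma card_inter: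
  "card (arch a1 a2 h \<inter> bracket b h1 h2) = card crossing_legs * card crossing_arms + (if central then 1 else 0)"
proof -
  have "(b, h) \<notin> crossing_legs \<times> crossing_arms" if central
    using that by (auto simp: crossing_legs_def)
  then show ?thesis
    by (simp add: inter_eq card_cartesian_product crossing_legs_def crossing_arms_def)
qed

lemma card_inter_cases: "card (arch a1 a2 h \<inter> bracket b h1 h2) \<in> {0, 2, 4}"
  using card_inter central_iff arch bracket by (auto simp: crossing_legs_eq crossing_arms_eq)

lemma card_inter_central: "(b, h) \<in> arch a1 a2 h \<Longrightarrow> (b, h) \<in> bracket b h1 h2 \<Longrightarrow>
    card (arch a1 a2 h \<inter> bracket b h1 h2) = 2"
  using card_inter crossing_cases[of "(b, h)"] arch bracket
  by (auto simp: crossing_legs_eq crossing_arms_eq)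

lemma crosses_transversally_inter:
  assumes "w \<in> arch a1 a2 h \<inter> bracket b h1 h2"
  shows "crosses_transversally_at (arch a1 a2 h) (bracket b h1 h2) w"
proof -
  have subs: "arch a1 a2 h \<subseteq> Tbar" "bracket b h1 h2 \<subseteq> Tbar"
    using arch bracket by (auto simp: arch_def bracket_def Tbar_iff)
  from crossing_cases[OF assms] show ?thesis
  proof (elim disjE conjE)
    assume w: "w = (b, h)" "a1 < b" "b < a2" "h1 < h" "h < h2"
    then have "\<exists>e>0. \<forall>y \<in> ball w e \<inter> Tbar. y \<in> bracket b h1 h2 \<longleftrightarrow> fst y = fst w"
      "\<exists>e>0. \<forall>y \<in> ball w e \<inter> Tbar. y \<in> arch a1 a2 h \<longleftrightarrow> snd y = snd w"
      using bracket_near_back[of h1 h h2 b] arch_near_top[of a1 b a2 h] by simp_all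
    then show ?thesis
      using crosses_transversally_atI(2)[OF subs(2,1)] by blast
  next
    assume "fst w \<in> {a1, a2}" "snd w \<in> {h1, h2}" "b < fst w" "snd w < h"
    then have "\<exists>e>0. \<forall>y \<in> ball w e \<inter> Tbar. y \<in> arch a1 a2 h \<longleftrightarrow> fst y = fst w"
      "\<exists>e>0. \<forall>y \<in> ball w e \<inter> Tbar. y \<in> bracket b h1 h2 \<longleftrightarrow> snd y = snd w"
      using arch_near_leg[of a1 a2 "fst w" "snd w" h] bracket_near_arm[of h1 h2 "snd w" b "fst w"] arch bracket
      by simp_all
    then show ?thesis
      using crosses_transversally_atI(1)[OF subs] by blast
  qed
qed

end

section \<open>The bones \<open>B\<^sub>-\<close>\<close>

lemma affine_preimage_interval:
  fixes \<alpha> \<beta> c d :: real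
  assumes "\<alpha> \<noteq> 0" "c < d"
  obtains a1 a2 where "a1 < a2"
    "\<And>a. \<alpha> * a + \<beta> \<in> {c..d} \<longleftrightarrow> a \<in> {a1..a2}"
    "\<And>a. \<alpha> * a + \<beta> = c \<or> \<alpha> * a + \<beta> = d \<longleftrightarrow> a = a1 \<or> a = a2"
    "\<And>a. \<alpha> * a + \<beta> \<in> {c<..<d} \<longleftrightarrow> a \<in> {a1<..<a2}"
proof (cases "0 < \<alpha>")
  case True
  show ?thesis
    by (rule that[of "(c - \<beta>) / \<alpha>" "(d - \<beta>) / \<alpha>"])
      (use True assms(2) in \<open>auto simp: field_simps\<close>)
next
  case False
  with assms(1) have "\<alpha> < 0" by simp
  show ?thesis
    by (rule that[of "(d - \<beta>) / \<alpha>" "(c - \<beta>) / \<alpha>"])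
      (use \<open>\<alpha> < 0\<close> assms(2) in \<open>auto simp: field_simps\<close>)
qed

lemma islimpt_le:
  fixes f g :: "'a::topological_space \<Rightarrow> 'b::linorder_topology"
  assumes "s islimpt G" "continuous_on UNIV f" "continuous_on UNIV g" "\<And>x. x \<in> G \<Longrightarrow> f x \<le> g x"
  shows "f s \<le> g s"
proof -
  have "s islimpt {x. f x \<le> g x}"
    using assms(4) by (intro islimpt_subset[OF assms(1)]) blast
  then show ?thesis
    using closed_Collect_le[OF assms(2,3)] by (simp add: closed_limpt)
qed

locale minus_bone =
  fixes p :: nat and \<sigma> :: "nat \<Rightarrow> nat"
  assumes p_ge_2: "2 \<le> p" and \<sigma>_into: "\<sigma> ` {1..p} \<subseteq> {1..p}"
begin

abbreviation "B \<equiv> bone_minus p \<sigma>"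

lemma p_pos: "0 < p"
  using p_ge_2 by simp

lemma bone_Tbar: "w \<in> B \<Longrightarrow> w \<in> Tbar"
  by (simp add: bone_minus_def)

lemma bone_order_type: "w \<in> B \<Longrightarrow> periodic_order_type (saw w) (1/3) p \<sigma>"
  by (simp add: bone_minus_def)

lemma orb_period: "w \<in> B \<Longrightarrow> orb w p = 1/3"
  using periodic_order_typeD(2)[OF bone_order_type] by (simp add: orb_def)

lemma orb_mod: "w \<in> B \<Longrightarrow> orb w (t mod p) = orb w t"
  using funpow_mod_eq[where f = "saw w" and n = p] orb_period by (simp add: orb_def)

lemma inj_on_orb: "w \<in> B \<Longrightarrow> inj_on (orb w) {..<p}"
  using inj_on_periodic_orbit[OF periodic_order_typeD(2,3)[OF bone_order_type]]
  by (simp add: orb_def[abs_def])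

lemma orb_eq_iff: "w \<in> B \<Longrightarrow> orb w s = orb w t \<longleftrightarrow> s mod p = t mod p"
  using orb_mod[of w s] orb_mod[of w t] inj_on_orb[of w] p_pos
  by (auto simp: inj_on_def)

lemma orb_less_1:
  assumes w: "w \<in> B" shows "orb w t < 1"
proof (rule ccontr)
  assume "\<not> orb w t < 1"
  then have "1 \<le> orb w (p * t - t + t)"
    by (simp add: orb_add funpow_saw_ge_one)
  moreover have "p * t - t + t = p * t"
    using p_ge_2 by (simp add: le_add_diff_inverse2)
  ultimately show False
    using orb_mod[OF w, of "p * t"] by simp
qed

text \<open>The first iterate \<open>w\<^sub>1\<close> is the largest point of the orbit: a larger point could only be
  reached from the right lap, where \<open>S\<^sub>w\<close> moves points below \<open>1\<close> further down.\<close>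
lemma orb_le_fst:
  assumes w: "w \<in> B" shows "orb w t \<le> fst w"
proof -
  have T: "w \<in> Tbar" using bone_Tbar[OF w] .
  define M where "M = Max (orb w ` {..<p})"
  have le_M: "orb w n \<le> M" for n
  proof -
    have "orb w (n mod p) \<in> orb w ` {..<p}" using p_pos by simp
    then show ?thesis using orb_mod[OF w, of n] by (simp add: M_def)
  qed
  obtain t0 where t0: "orb w t0 = M"
    using Max_in[of "orb w ` {..<p}"] p_pos unfolding M_def by (metis empty_iff finite_imageI
        finite_lessThan image_iff image_is_empty lessThan_iff)
  define z where "z = orb w (t0 + p - 1)"
  have "M = saw w z"
    using orb_mod[OF w, of "t0 + p"] orb_mod[OF w, of t0] p_ge_2 t0
    by (simp add: z_def flip: orb_Suc)
  moreover have "saw w z \<le> max (fst w) (3 * z - 2)"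
    using T by (auto simp: saw_def Tbar_iff)
  moreover have "z < 1" "z \<le> M"
    using orb_less_1[OF w] le_M by (simp_all add: z_def)
  ultimately have "M \<le> fst w" by linarith
  then show ?thesis using le_M[of t] by simp
qed

lemma orb_less_fst: "w \<in> B \<Longrightarrow> t mod p \<noteq> 1 \<Longrightarrow> orb w t < fst w"
  using orb_le_fst[of w t] orb_eq_iff[of w t 1] orb_1[OF bone_Tbar, of w] p_ge_2 by fastforce

lemma fst_gt_third: "w \<in> B \<Longrightarrow> 1/3 < fst w"
  using orb_less_fst[of w 0] p_ge_2 by simp

lemma fst_less_1: "w \<in> B \<Longrightarrow> fst w < 1"
  using orb_less_1[of w 1] orb_1[OF bone_Tbar] by simp

lemma saw_orb_less_fst: "w \<in> B \<Longrightarrow> t mod p \<noteq> 0 \<Longrightarrow> saw w (orb w t) < fst w"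
  using orb_less_fst[of w "Suc t"] p_ge_2 by (simp add: orb_Suc mod_Suc split: if_splits)

lemma rank_orb_1: "w \<in> B \<Longrightarrow> rank (orb w) p 1 = p - 1"
proof -
  assume w: "w \<in> B"
  have "{s. s < p \<and> orb w s < orb w 1} = {..<p} - {1}"
    using orb_less_fst[OF w] orb_1[OF bone_Tbar[OF w]] by auto
  then show ?thesis using p_ge_2 by (simp add: rank_def)
qed

lemma rank_orb_Suc:
  "w \<in> B \<Longrightarrow> t < p \<Longrightarrow> rank (orb w) p (Suc t mod p) = \<sigma> (rank (orb w) p t + 1) - 1"
  using periodic_order_type_iff_rank[OF periodic_order_typeD[OF bone_order_type] \<sigma>_into]
    bone_order_type by (simp add: orb_def[abs_def])

text \<open>All parameters in \<open>B\<close> have orbits of the same shape: the ranks along the orbit are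
  determined by \<open>\<sigma>\<close>, starting from the rank \<open>p - 1\<close> of \<open>w\<^sub>1\<close>.\<close>
lemma rank_orb_eq:
  assumes w: "w \<in> B" and w': "w' \<in> B" and t: "t < p"
  shows "rank (orb w) p t = rank (orb w') p t"
proof -
  have "rank (orb w) p (n mod p) = rank (orb w') p (n mod p)" if "1 \<le> n" "n \<le> p" for n
    using that
  proof (induction n rule: dec_induct)
    case base
    then show ?case using rank_orb_1[OF w] rank_orb_1[OF w'] p_ge_2 by simp
  next
    case (step n)
    then show ?case using rank_orb_Suc[OF w, of n] rank_orb_Suc[OF w', of n] by simp
  qed
  from this[of p] this[of t] t p_ge_2 show ?thesis
    by (cases "t = 0") simp_all
qed

lemma orb_less_iff:
  assumes w: "w \<in> B" and w': "w' \<in> B"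
  shows "orb w s < orb w t \<longleftrightarrow> orb w' s < orb w' t"
proof -
  have "orb w (s mod p) < orb w (t mod p) \<longleftrightarrow> orb w' (s mod p) < orb w' (t mod p)"
    using rank_less_iff[OF inj_on_orb[OF w]] rank_less_iff[OF inj_on_orb[OF w']] rank_orb_eq[OF w w']
      mod_less_divisor[OF p_pos] by metis
  then show ?thesis using orb_mod[OF w] orb_mod[OF w'] by simp
qed

lemma bone_transfer:
  assumes w: "w \<in> B" and T: "w' \<in> Tbar" and agree: "\<And>t. t < p \<Longrightarrow> saw w' (orb w t) = saw w (orb w t)"
  shows "w' \<in> B"
proof -
  have eq: "orb w' t = orb w t" if "t \<le> p" for t
    using that by (induction t) (simp_all add: orb_Suc agree)
  have "periodic_order_type (saw w') (1/3) p \<sigma>"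
    by (rule periodic_order_type_transfer[OF bone_order_type[OF w] \<sigma>_into])
      (use eq orb_period[OF w] in \<open>simp_all add: orb_def\<close>)
  with T show ?thesis by (simp add: bone_minus_def)
qed

lemma plateau_time_exists:
  assumes w0: "w0 \<in> B"
  obtains j where "1 \<le> j" "j < p" "1/3 < orb w0 j"
    "\<And>t. 1 \<le> t \<Longrightarrow> t < p \<Longrightarrow> 1/3 < orb w0 t \<Longrightarrow> orb w0 (Suc j) \<le> orb w0 (Suc t)"
proof -
  let ?J = "{t. 1 \<le> t \<and> t < p \<and> 1/3 < orb w0 t}"
  have "finite ?J" by (rule finite_subset[of _ "{..<p}"]) auto
  moreover have "1 \<in> ?J"
    using p_ge_2 orb_1[OF bone_Tbar[OF w0]] fst_gt_third[OF w0] by simp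
  ultimately show ?thesis
    using arg_min_if_finite[of ?J "\<lambda>t. orb w0 (Suc t)"] that
    by (metis (no_types, lifting) empty_iff mem_Collect_eq not_less)
qed

end

text \<open>The orbit point \<open>x\<^sub>j\<close> is the one that lands on the lower plateau, at height \<open>h\<close>:
  among the orbit points right of \<open>1/3\<close> it has the lowest image.\<close>
locale minus_bone_plateau = minus_bone +
  fixes w0 :: "real \<times> real" and j :: nat and h :: real
  assumes w0: "w0 \<in> B"
    and j: "1 \<le> j" "j < p" "1/3 < orb w0 j"
    and j_min: "\<And>t. 1 \<le> t \<Longrightarrow> t < p \<Longrightarrow> 1/3 < orb w0 t \<Longrightarrow> orb w0 (Suc j) \<le> orb w0 (Suc t)"
    and h_def: "h = orb w0 (Suc j)"
begin

abbreviation "plateau \<equiv> {(2 - h)/3..(2 + h)/3}"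

lemma orb_Suc_j_less:
  assumes w: "w \<in> B" and t: "1 \<le> t" "t < p" "1/3 < orb w0 t" "t \<noteq> j"
  shows "orb w (Suc j) < orb w (Suc t)"
proof -
  have "Suc j mod p \<noteq> Suc t mod p"
    using Suc_mod_inj t j by blast
  then have "orb w0 (Suc j) \<noteq> orb w0 (Suc t)"
    using orb_eq_iff[OF w0] by blast
  then have "orb w0 (Suc j) < orb w0 (Suc t)"
    using j_min[OF t(1-3)] by simp
  then show ?thesis using orb_less_iff[OF w0 w] by blast
qed

lemma orb_j_gt_third: "w \<in> B \<Longrightarrow> 1/3 < orb w j"
  using orb_less_iff[OF w0, of w 0 j] j by simp

text \<open>The lap containing \<open>x\<^sub>t\<close> is the same for all parameters in \<open>B\<close>; it is read off
  the orbit of \<open>w0\<close>.\<close>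
definition lap_of :: "nat \<Rightarrow> lap" where
  "lap_of t = (if orb w0 t < 1/3 then Left else if orb w0 t < orb w0 j then Middle else Right)"

lemma orb_left:
  assumes w: "w \<in> B" and t: "1 \<le> t" "t < p" "lap_of t = Left"
  shows "orb w t < fst w / 3 \<and> saw w (orb w t) = 3 * orb w t"
proof -
  have T: "w \<in> Tbar" using bone_Tbar[OF w] .
  have "orb w t < 1/3"
    using t orb_less_iff[OF w0 w, of t 0] by (simp add: lap_of_def split: if_splits)
  moreover have lt: "saw w (orb w t) < fst w"
    using saw_orb_less_fst[OF w] t by simp
  ultimately have "saw w (orb w t) = 3 * orb w t"
    using saw_left[OF T] by simp
  with lt show ?thesis by simp
qed

lemma orb_middle:
  assumes w: "w \<in> B" and t: "1 \<le> t" "t < p" "lap_of t = Middle"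
  shows "(2 - fst w)/3 < orb w t \<and> orb w t \<le> 2/3 \<and> saw w (orb w t) = 2 - 3 * orb w t"
proof -
  have T: "w \<in> Tbar" using bone_Tbar[OF w] .
  define x z where "x = orb w t" and "z = orb w j"
  have t0: "orb w0 t \<noteq> 1/3" using orb_eq_iff[OF w0, of t 0] t by simp
  then have x: "1/3 < x" "x < z" "1/3 < orb w0 t"
    using t orb_less_iff[OF w0 w, of 0 t] orb_less_iff[OF w0 w, of t j]
    by (auto simp: lap_of_def x_def z_def split: if_splits)
  have z: "1/3 < z" using orb_j_gt_third[OF w] by (simp add: z_def)
  have gt: "saw w z < saw w x"
    using orb_Suc_j_less[OF w t(1,2) x(3)] x(2) by (auto simp: x_def z_def orb_Suc)
  have ne: "saw w x < fst w" using saw_orb_less_fst[OF w] t by (simp add: x_def)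
  have "x \<le> 2/3"
  proof (rule ccontr)
    assume "\<not> x \<le> 2/3"
    then show False using gt x(2) saw_right[of x w] saw_right[of z w] by auto
  qed
  moreover have "snd w \<le> saw w z" using saw_ge_snd[OF T] z by simp
  ultimately show ?thesis
    using saw_middle[OF T x(1)] gt ne saw_le_fst[OF T] by (auto simp: x_def max_def split: if_splits)
qed

lemma orb_right:
  assumes w: "w \<in> B" and t: "1 \<le> t" "t < p" "t \<noteq> j" "lap_of t = Right"
  shows "2/3 < orb w t \<and> saw w (orb w t) = 3 * orb w t - 2"
proof -
  have T: "w \<in> Tbar" using bone_Tbar[OF w] .
  define x z where "x = orb w t" and "z = orb w j"
  have "orb w0 t \<noteq> orb w0 j" using orb_eq_iff[OF w0, of t j] t j by simp
  then have xz: "z < x" "orb w0 j < orb w0 t"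
    using t orb_less_iff[OF w0 w, of j t] by (auto simp: lap_of_def x_def z_def split: if_splits)
  have z: "1/3 < z" using orb_j_gt_third[OF w] by (simp add: z_def)
  have gt: "saw w z < saw w x"
    using orb_Suc_j_less[OF w t(1,2) _ t(3)] xz(2) j(3) by (simp add: x_def z_def orb_Suc)
  have ne: "saw w z < fst w" "saw w x < fst w"
    using saw_orb_less_fst[OF w] j t by (simp_all add: x_def z_def)
  have "2/3 < x"
  proof (rule ccontr)
    assume "\<not> 2/3 < x"
    then have "saw w x \<le> saw w z"
      using saw_middle[OF T z] saw_middle[OF T, of x] xz(1) z ne by (auto simp: max_def)
    then show False using gt by simp
  qed
  moreover have "snd w \<le> saw w z" using saw_ge_snd[OF T] z by simp
  ultimately show ?thesis
    using saw_right[of x w] gt by (auto simp: x_def max_def)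
qed

lemma saw_orb_lap:
  assumes "w \<in> B" "1 \<le> t" "t < p" "t \<noteq> j"
  shows "saw w (orb w t) = lap_map (lap_of t) (orb w t)"
  using orb_left[OF assms(1-3)] orb_middle[OF assms(1-3)] orb_right[OF assms]
  by (cases "lap_of t") simp_all

text \<open>The orbit of \<open>1/3\<close> as dictated by the laps of \<open>B\<close>, as a function of \<open>w\<^sub>1 = a\<close> and of
  the value \<open>v\<close> right after the plateau.\<close>
primrec model_orbit :: "real \<Rightarrow> real \<Rightarrow> nat \<Rightarrow> real" where
  "model_orbit a v 0 = 1/3"
| "model_orbit a v (Suc t) =
    (if t = 0 then a else if t = j then v else lap_map (lap_of t) (model_orbit a v t))"

lemma orb_eq_model_orbit_Suc_j:
  assumes w: "w \<in> B"
  shows "t \<le> p \<Longrightarrow> orb w t = model_orbit (fst w) (orb w (Suc j)) t"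
proof (induction t)
  case (Suc t)
  consider "t = 0" | "t = j" | "1 \<le> t" "t \<noteq> j" by linarith
  then show ?case
  proof cases
    case 1
    then show ?thesis using orb_1[OF bone_Tbar[OF w]] by simp
  next
    case 2
    then show ?thesis using j(1) by simp
  next
    case 3
    then show ?thesis using Suc saw_orb_lap[OF w, of t] by (simp add: orb_Suc)
  qed
qed simp

lemma model_orbit_indep_fst: "j < t \<Longrightarrow> model_orbit a v t = model_orbit a' v t"
proof (induction t)
  case (Suc t)
  then show ?case using j(1) by (cases "t = j") simp_all
qed simp

lemma model_orbit_inj_snd: "j < t \<Longrightarrow> model_orbit a v t = model_orbit a v' t \<Longrightarrow> v = v'"
proof (induction t)
  case (Suc t)
  show ?case
  proof (cases "t = j")
    case True
    then show ?thesis using Suc.prems j(1) by simp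
  next
    case False
    then have "j < t" "t \<noteq> 0" using Suc.prems(1) j(1) by auto
    then have "model_orbit a v t = model_orbit a v' t"
      using Suc.prems(2) by (auto dest: lap_map_inj)
    then show ?thesis using Suc.IH \<open>j < t\<close> by blast
  qed
qed simp

lemma orb_Suc_j: "w \<in> B \<Longrightarrow> orb w (Suc j) = h"
proof -
  assume w: "w \<in> B"
  have "model_orbit (fst w) (orb w (Suc j)) p = orb w p"
    using orb_eq_model_orbit_Suc_j[OF w, of p] by simp
  also have "\<dots> = orb w0 p"
    using orb_period[OF w] orb_period[OF w0] by simp
  also have "\<dots> = model_orbit (fst w0) h p"
    using orb_eq_model_orbit_Suc_j[OF w0, of p] h_def by simp
  also have "\<dots> = model_orbit (fst w) h p"
    using model_orbit_indep_fst[OF j(2)] .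
  finally show ?thesis using model_orbit_inj_snd[OF j(2)] by blast
qed

lemma orb_eq_model_orbit: "w \<in> B \<Longrightarrow> t \<le> p \<Longrightarrow> orb w t = model_orbit (fst w) h t"
  using orb_eq_model_orbit_Suc_j orb_Suc_j by simp

lemma model_orbit_period: "model_orbit a h p = 1/3"
proof -
  have "model_orbit a h p = model_orbit (fst w0) h p"
    using model_orbit_indep_fst[OF j(2)] .
  also have "\<dots> = orb w0 p"
    using orb_eq_model_orbit[OF w0, of p] by simp
  finally show ?thesis using orb_period[OF w0] by simp
qed

lemma model_orbit_Suc_mod: "t < p \<Longrightarrow> model_orbit a h (Suc t mod p) = model_orbit a h (Suc t)"
  using model_orbit_period[of a] by (cases "Suc t = p") (simp_all del: model_orbit.simps(2))

lemma model_orbit_Suc_j_mod: "model_orbit a h (Suc j mod p) = h"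
  using model_orbit_Suc_mod[OF j(2)] j(1) by simp

lemma h_less_fst: "w \<in> B \<Longrightarrow> h < fst w"
  using orb_less_fst[of w "Suc j"] orb_Suc_j j by (simp add: mod_Suc)

lemma h_pos: "0 < h"
proof -
  have T: "w0 \<in> Tbar" using bone_Tbar[OF w0] .
  have "1 * Suc j \<le> p * Suc j"
    using p_pos by (intro mult_le_mono1) simp
  then have shift_back: "p * Suc j - Suc j + Suc j = p * Suc j"
    by simp
  have "h \<noteq> 0"
  proof
    assume "h = 0"
    then have "orb w0 (p * Suc j - Suc j + Suc j) = 0"
      using orb_add[of w0 _ "Suc j"] funpow_saw_zero[OF T] orb_Suc_j[OF w0] by simp
    then have "orb w0 (p * Suc j) = 0" unfolding shift_back .
    moreover have "orb w0 (p * Suc j) = 1/3" using orb_mod[OF w0, of "p * Suc j"] by simp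
    ultimately show False by simp
  qed
  moreover have "0 \<le> h"
    using saw_nonneg[OF T] orb_j_gt_third[OF w0] h_def by (simp add: orb_Suc)
  ultimately show ?thesis by simp
qed

lemma h_less_1: "h < 1"
  using h_less_fst[OF w0] fst_less_1[OF w0] by simp

lemma model_orbit_affine:
  "\<exists>\<alpha> \<beta>. (\<forall>a. model_orbit a h t = \<alpha> * a + \<beta>) \<and> (1 \<le> t \<longrightarrow> t \<le> j \<longrightarrow> \<alpha> \<noteq> 0)"
proof (induction t)
  case 0
  then show ?case by (intro exI[of _ 0] exI[of _ "1/3"]) simp
next
  case (Suc t)
  then obtain \<alpha> \<beta> where ab: "\<forall>a. model_orbit a h t = \<alpha> * a + \<beta>" "1 \<le> t \<longrightarrow> t \<le> j \<longrightarrow> \<alpha> \<noteq> 0"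
    by blast
  obtain c d where c: "c \<noteq> 0" "\<forall>x. lap_map (lap_of t) x = c * x + d"
    using lap_map_affine by blast
  consider "t = 0" | "t = j" | "t \<noteq> 0" "t \<noteq> j" by blast
  then show ?case
  proof cases
    case 1
    then show ?thesis by (intro exI[of _ 1] exI[of _ 0]) simp
  next
    case 2
    then show ?thesis using j(1) by (intro exI[of _ 0] exI[of _ h]) simp
  next
    case 3
    then show ?thesis using ab c
      by (intro exI[of _ "c * \<alpha>"] exI[of _ "c * \<beta> + d"]) (simp add: algebra_simps)
  qed
qed

lemma continuous_model_orbit: "continuous_on UNIV (\<lambda>a. model_orbit a h t)"
proof -
  obtain \<alpha> \<beta> where "\<And>a. model_orbit a h t = \<alpha> * a + \<beta>"
    using model_orbit_affine by blast
  then show ?thesis by (simp add: continuous_intros)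
qed

lemma bone_cases:
  assumes w: "w \<in> B"
  shows "(snd w = h \<and> model_orbit (fst w) h j \<in> plateau) \<or>
    ((model_orbit (fst w) h j = (2 - h)/3 \<or> model_orbit (fst w) h j = (2 + h)/3) \<and> snd w \<le> h)"
proof -
  have T: "w \<in> Tbar" using bone_Tbar[OF w] .
  define x where "x = model_orbit (fst w) h j"
  have x: "orb w j = x" using orb_eq_model_orbit[OF w] j by (simp add: x_def)
  have "1/3 < x" using orb_j_gt_third[OF w] x by simp
  moreover have "saw w x = h" using orb_Suc_j[OF w] x by (simp add: orb_Suc)
  moreover have "saw w x < fst w" using saw_orb_less_fst[OF w, of j] j x by simp
  ultimately show ?thesis
    using saw_middle[OF T, of x] saw_right[of x w] T h_pos
    by (cases "x \<le> 2/3") (auto simp: x_def Tbar_iff max_def split: if_splits)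
qed

lemma orb_in_lap_interior:
  assumes w: "w \<in> B" and t: "1 \<le> t" "t < p" "t \<noteq> j"
  shows "orb w t \<in> lap_interior (fst w) h (lap_of t)"
proof -
  have "orb w0 t \<noteq> 1/3" using orb_eq_iff[OF w0, of t 0] t by simp
  then have "lap_of t \<noteq> Left \<Longrightarrow> h < saw w (orb w t)"
    using orb_Suc_j_less[OF w t(1,2) _ t(3)] orb_Suc_j[OF w]
    by (auto simp: lap_of_def orb_Suc split: if_splits)
  then show ?thesis
    using orb_left[OF w t(1,2)] orb_middle[OF w t(1,2)] orb_right[OF w t]
    by (cases "lap_of t") (auto simp: field_simps)
qed

lemma saw_orb_lower:
  assumes w: "w \<in> B" and b: "b \<le> h" and t: "1 \<le> t" "t < p" "t \<noteq> j"
  shows "saw (fst w, b) (orb w t) = lap_map (lap_of t) (orb w t)"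
  using saw_lap[OF subsetD[OF lap_interior_subset orb_in_lap_interior[OF w t]] b h_pos]
    h_less_fst[OF w] bone_Tbar[OF w] by (simp add: Tbar_iff)

lemma bone_vertical:
  assumes w: "w \<in> B" and e: "model_orbit (fst w) h j = (2 - h)/3 \<or> model_orbit (fst w) h j = (2 + h)/3"
    and b: "0 \<le> b" "b \<le> h"
  shows "(fst w, b) \<in> B"
proof -
  have T: "w \<in> Tbar" using bone_Tbar[OF w] .
  have w_eq: "w = (fst w, snd w)" by simp
  have sw: "0 \<le> snd w" "snd w \<le> h" using bone_cases[OF w] T by (auto simp: Tbar_iff)
  have T': "(fst w, b) \<in> Tbar" using T h_less_fst[OF w] b by (simp add: Tbar_iff)
  have "saw (fst w, b) (orb w t) = saw w (orb w t)" if t: "t < p" for t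
  proof -
    consider "t = 0" | "t = j" | "1 \<le> t" "t \<noteq> j" by linarith
    then show ?thesis
    proof cases
      case 1
      then show ?thesis using saw_one_third[OF T] saw_one_third[OF T'] by simp
    next
      case 2
      then have "orb w t = (2 - h)/3 \<or> orb w t = (2 + h)/3"
        using orb_eq_model_orbit[OF w] e j by simp
      then show ?thesis
        using saw_plateau_end[OF _ b h_pos] saw_plateau_end[OF _ sw h_pos] h_less_fst[OF w] h_less_1
          w_eq by (metis less_imp_le)
    next
      case 3
      then show ?thesis using saw_orb_lower[OF w b(2)] saw_orb_lower[OF w sw(2)] t w_eq by metis
    qed
  qed
  then show ?thesis using bone_transfer[OF w T'] by blast
qed

lemma plateau_params:
  obtains a1 a2 where "a1 < a2"
    "\<And>a. model_orbit a h j \<in> plateau \<longleftrightarrow> a \<in> {a1..a2}"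
    "\<And>a. model_orbit a h j = (2 - h)/3 \<or> model_orbit a h j = (2 + h)/3 \<longleftrightarrow> a = a1 \<or> a = a2"
    "\<And>a. model_orbit a h j \<in> {(2 - h)/3<..<(2 + h)/3} \<longleftrightarrow> a \<in> {a1<..<a2}"
proof -
  obtain \<alpha> \<beta> where affine: "\<And>a. model_orbit a h j = \<alpha> * a + \<beta>" and "\<alpha> \<noteq> 0"
    using model_orbit_affine[of j] j(1) by auto
  have "(2 - h)/3 < (2 + h)/3" using h_pos by simp
  show ?thesis
    by (rule affine_preimage_interval[OF \<open>\<alpha> \<noteq> 0\<close> \<open>(2 - h)/3 < (2 + h)/3\<close>, where \<beta> = \<beta>])
      (rule that, simp_all add: affine)
qed

lemma bone_plateau:
  assumes "w \<in> B" shows "model_orbit (fst w) h j \<in> plateau"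
  using bone_cases[OF assms] h_pos by auto

text \<open>Apart from landing on the plateau, the conditions for \<open>(a, h) \<in> B\<close> in terms of the model
  orbit: they are open in \<open>a\<close>.\<close>
definition strict_model :: "real \<Rightarrow> bool" where
  "strict_model a \<longleftrightarrow> a < 1 \<and>
    (\<forall>s<p. \<forall>t<p. orb w0 s < orb w0 t \<longrightarrow> model_orbit a h s < model_orbit a h t) \<and>
    (\<forall>t \<in> {1..<p} - {j}. model_orbit a h t \<in> lap_interior a h (lap_of t))"

lemma orb_Suc_j_mod_less_1: "orb w0 (Suc j mod p) < orb w0 1"
proof -
  have "Suc j mod p \<noteq> 1" using j by (simp add: mod_Suc)
  then show ?thesis
    using orb_less_fst[OF w0] orb_1[OF bone_Tbar[OF w0]] orb_mod[OF w0] by simp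
qed

lemma h_less_of_strict_model:
  assumes "strict_model a" shows "h < a"
proof -
  have "Suc j mod p < p" "1 < p" using p_pos p_ge_2 by simp_all
  with orb_Suc_j_mod_less_1 have "model_orbit a h (Suc j mod p) < model_orbit a h 1"
    using assms unfolding strict_model_def by blast
  then show ?thesis using model_orbit_Suc_j_mod by simp
qed

lemma saw_model_orbit:
  assumes a: "h \<le> a" "a \<le> 1" "model_orbit a h j \<in> plateau"
    and laps: "\<And>t. t \<in> {1..<p} - {j} \<Longrightarrow> model_orbit a h t \<in> lap_interval a h (lap_of t)"
    and t: "t < p"
  shows "saw (a, h) (model_orbit a h t) = model_orbit a h (Suc t)"
proof -
  consider "t = 0" | "t = j" | "t \<in> {1..<p} - {j}" using t by force
  then show ?thesis
  proof cases
    case 1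
    then show ?thesis using saw_one_third[of "(a, h)"] a h_pos by (simp add: Tbar_iff)
  next
    case 2
    then show ?thesis using saw_plateau[OF a(3) h_pos a(1) h_less_1] j(1) by simp
  next
    case 3
    then show ?thesis using saw_lap[OF laps[OF 3] order.refl h_pos a(1,2)] by auto
  qed
qed

lemma orb_eq_model_orbit_of_laps:
  assumes "h \<le> a" "a \<le> 1" "model_orbit a h j \<in> plateau"
    and "\<And>t. t \<in> {1..<p} - {j} \<Longrightarrow> model_orbit a h t \<in> lap_interval a h (lap_of t)"
  shows "t \<le> p \<Longrightarrow> orb (a, h) t = model_orbit a h t"
proof (induction t)
  case (Suc t)
  then have "t < p" by simp
  then have "orb (a, h) (Suc t) = saw (a, h) (model_orbit a h t)"
    using Suc.IH by (simp add: orb_Suc)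
  also have "\<dots> = model_orbit a h (Suc t)"
    by (rule saw_model_orbit[OF assms \<open>t < p\<close>])
  finally show ?case .
qed simp

lemma strict_model_imp_bone:
  assumes plateau: "model_orbit a h j \<in> plateau" and a: "strict_model a"
  shows "(a, h) \<in> B"
proof -
  have ha: "h < a" "a < 1"
    using h_less_of_strict_model[OF a] a by (auto simp: strict_model_def)
  have pattern: "\<And>s t. s < p \<Longrightarrow> t < p \<Longrightarrow> orb w0 s < orb w0 t \<Longrightarrow> model_orbit a h s < model_orbit a h t"
    using a by (simp add: strict_model_def)
  have "\<And>t. t \<in> {1..<p} - {j} \<Longrightarrow> model_orbit a h t \<in> lap_interval a h (lap_of t)"
    using a lap_interior_subset unfolding strict_model_def by blast
  note orbit = orb_eq_model_orbit_of_laps[OF _ _ plateau this]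
  have same: "orb w0 s < orb w0 t \<longleftrightarrow> orb (a, h) s < orb (a, h) t" if "s < p" "t < p" for s t
  proof -
    have "s \<noteq> t \<Longrightarrow> orb w0 s \<noteq> orb w0 t"
      using orb_eq_iff[OF w0, of s t] that by simp
    then show ?thesis
      using pattern[OF that] pattern[OF that(2,1)] orbit[of s] orbit[of t] that ha
      by (cases "s = t") (auto simp: neq_iff)
  qed
  have "periodic_order_type (saw (a, h)) (1/3) p \<sigma>"
    by (rule periodic_order_type_transfer[OF bone_order_type[OF w0] \<sigma>_into])
      (use orbit[of p] model_orbit_period same ha in \<open>simp_all add: orb_def\<close>)
  with ha h_pos show ?thesis by (simp add: bone_minus_def Tbar_iff)
qed

lemma bone_imp_strict_model:
  assumes w: "(a, h) \<in> B"
  shows "strict_model a"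
  unfolding strict_model_def
  using fst_less_1[OF w] orb_less_iff[OF w0 w] orb_eq_model_orbit[OF w] orb_in_lap_interior[OF w]
  by auto

lemma open_strict_model: "open {a. strict_model a}"
proof -
  have laps: "open {a. model_orbit a h t \<in> lap_interior a h l}" for t l
    by (cases l) (auto intro!: open_Collect_less open_Collect_conj continuous_intros continuous_model_orbit)
  have pattern: "open {a. orb w0 s < orb w0 t \<longrightarrow> model_orbit a h s < model_orbit a h t}" for s t
    by (cases "orb w0 s < orb w0 t") (auto intro!: open_Collect_less continuous_model_orbit)
  have "{a. strict_model a} = {a. a < 1} \<inter>
      (\<Inter>s\<in>{..<p}. \<Inter>t\<in>{..<p}. {a. orb w0 s < orb w0 t \<longrightarrow> model_orbit a h s < model_orbit a h t}) \<inter>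
      (\<Inter>t \<in> {1..<p} - {j}. {a. model_orbit a h t \<in> lap_interior a h (lap_of t)})"
    by (auto simp: strict_model_def)
  also have "open \<dots>"
    by (intro open_Int open_INT finite_lessThan finite_Diff finite_atLeastLessThan ballI laps pattern)
      (auto intro!: open_Collect_less continuous_intros)
  finally show ?thesis .
qed

lemma strict_model_limit_weak:
  assumes s: "s islimpt {a. strict_model a}"
  shows "s \<le> 1"
    and "\<And>u t. u < p \<Longrightarrow> t < p \<Longrightarrow> orb w0 u < orb w0 t \<Longrightarrow> model_orbit s h u \<le> model_orbit s h t"
    and "\<And>t. t \<in> {1..<p} - {j} \<Longrightarrow> model_orbit s h t \<in> lap_interval s h (lap_of t)"
proof -
  note limit = islimpt_le[OF s]
  show "s \<le> 1"
    by (rule limit) (auto simp: strict_model_def)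
  show "model_orbit s h u \<le> model_orbit s h t" if "u < p" "t < p" "orb w0 u < orb w0 t" for u t
  proof (rule limit[OF continuous_model_orbit continuous_model_orbit])
    fix x assume "x \<in> {a. strict_model a}"
    then have "model_orbit x h u < model_orbit x h t"
      using that unfolding strict_model_def by blast
    then show "model_orbit x h u \<le> model_orbit x h t" by simp
  qed
  have le: "f s \<le> g s"
    if "continuous_on UNIV f" "continuous_on UNIV g" "\<And>x. strict_model x \<Longrightarrow> f x < g x"
    for f g :: "real \<Rightarrow> real"
    using limit[OF that(1,2)] that(3) less_imp_le by blast
  show "model_orbit s h t \<in> lap_interval s h (lap_of t)" if t: "t \<in> {1..<p} - {j}" for t
  proof -
    have lap: "model_orbit x h t \<in> lap_interior x h (lap_of t)" if "strict_model x" for x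
      using that t by (simp add: strict_model_def)
    have cont: "continuous_on UNIV (\<lambda>x. model_orbit x h t)" "continuous_on UNIV (\<lambda>x::real. x / 3)"
      "continuous_on UNIV (\<lambda>x::real. (2 - x) / 3)" "continuous_on UNIV (\<lambda>x::real. c)" for c
      by (auto intro!: continuous_intros continuous_model_orbit)
    show ?thesis
    proof (cases "lap_of t")
      case Left
      then show ?thesis using le[OF cont(1,2)] lap by simp
    next
      case Middle
      then show ?thesis using le[OF cont(3,1)] le[OF cont(1) cont(4)[of "(2 - h)/3"]] lap by simp
    next
      case Right
      then show ?thesis using le[OF cont(4)[of "(2 + h)/3"] cont(1)] lap by simp
    qed
  qed
qed

lemma model_orbit_ne_third:
  assumes s: "s islimpt {a. strict_model a}" "model_orbit s h j \<in> plateau" "s < 1"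
    and c: "1 \<le> c" "c < p"
  shows "model_orbit s h c \<noteq> 1/3"
proof
  assume c3: "model_orbit s h c = 1/3"
  consider "j < c" | "c = j" | "c < j" by linarith
  then show False
  proof cases
    case 1
    then have "orb w0 c = 1/3"
      using orb_eq_model_orbit[OF w0, of c] model_orbit_indep_fst[OF 1, of "fst w0" h s] c c3 by simp
    then show False using orb_eq_iff[OF w0, of c 0] c by simp
  next
    case 2
    then show False using s(2) c3 h_less_1 by simp
  next
    case 3
    let ?U = "{x. x/3 < model_orbit x h c \<and> model_orbit x h c < (2 - x)/3}"
    have "s \<in> ?U" using c3 s(3) by simp
    moreover have "open ?U"
      by (auto intro!: open_Collect_conj open_Collect_less continuous_intros continuous_model_orbit)
    ultimately obtain x where "x \<in> {a. strict_model a}" "x \<in> ?U"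
      by (rule islimptE[OF s(1)])
    then have x: "strict_model x" "x \<in> ?U" by simp_all
    have "c \<in> {1..<p} - {j}" using c 3 by simp
    then have "model_orbit x h c \<in> lap_interior x h (lap_of c)"
      using x(1) unfolding strict_model_def by blast
    with x(2) h_pos h_less_of_strict_model[OF x(1)] show False
      by (cases "lap_of c") auto
  qed
qed

text \<open>A collision \<open>x\<^sub>u = x\<^sub>t\<close> with \<open>u < t\<close> would make the orbit return to \<open>1/3\<close> at time
  \<open>u + p - t\<close>.\<close>
lemma inj_on_model_orbit_limit:
  assumes s: "s islimpt {a. strict_model a}" "model_orbit s h j \<in> plateau" "h \<le> s" "s < 1"
    and laps: "\<And>t. t \<in> {1..<p} - {j} \<Longrightarrow> model_orbit s h t \<in> lap_interval s h (lap_of t)"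
  shows "inj_on (model_orbit s h) {..<p}"
proof -
  note orbit = orb_eq_model_orbit_of_laps[OF s(3) less_imp_le[OF s(4)] s(2) laps]
  have "u = t" if ut: "u < t" "t < p" "model_orbit s h u = model_orbit s h t" for u t
  proof -
    have "orb (s, h) (p - t + u) = (saw (s, h) ^^ (p - t)) (orb (s, h) u)"
      by (rule orb_add)
    also have "orb (s, h) u = orb (s, h) t"
      using ut orbit[of u] orbit[of t] by simp
    also have "(saw (s, h) ^^ (p - t)) (orb (s, h) t) = orb (s, h) (p - t + t)"
      by (rule orb_add[symmetric])
    also have "p - t + t = p"
      using ut by simp
    finally have "model_orbit s h (p - t + u) = 1/3"
      using orbit[of "p - t + u"] orbit[of p] model_orbit_period ut by simp
    moreover have "1 \<le> p - t + u" "p - t + u < p" using ut by auto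
    ultimately show ?thesis using model_orbit_ne_third[OF s(1,2,4)] by blast
  qed
  then show ?thesis
    by (intro inj_onI) (metis lessThan_iff linorder_cases)
qed

text \<open>If the model orbit is injective, it cannot hit an end of a lap: the image of that point
  would be \<open>w\<^sub>1 = x\<^sub>1\<close> or \<open>h = x\<^bsub>j+1\<^esub>\<close>.\<close>
lemma model_orbit_in_lap_interior:
  assumes a: "h \<le> a" "a < 1" "model_orbit a h j \<in> plateau"
    and laps: "\<And>t. t \<in> {1..<p} - {j} \<Longrightarrow> model_orbit a h t \<in> lap_interval a h (lap_of t)"
    and inj: "inj_on (model_orbit a h) {..<p}"
    and t: "t \<in> {1..<p} - {j}"
  shows "model_orbit a h t \<in> lap_interior a h (lap_of t)"
proof (rule lap_interval_minus_ends[OF laps[OF t]], rule notI)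
  have Suc_inj: "u = v" if "u < p" "v < p" "model_orbit a h (Suc u) = model_orbit a h (Suc v)" for u v
  proof -
    have "model_orbit a h (Suc u mod p) = model_orbit a h (Suc v mod p)"
      using that by (simp only: model_orbit_Suc_mod)
    then have "Suc u mod p = Suc v mod p"
      using inj p_pos by (auto simp: inj_on_def)
    then show ?thesis using Suc_mod_inj that by blast
  qed
  define x where "x = model_orbit a h t"
  assume "model_orbit a h t \<in> {a/3, (2 - a)/3, (2 - h)/3, (2 + h)/3}"
  then consider "x = a/3 \<or> x = (2 - a)/3" | "x \<in> plateau"
    using h_pos by (auto simp: x_def)
  then have "saw (a, h) x = a \<or> saw (a, h) x = h"
    using a by cases (use saw_lap_top[OF _ _ a(1)] saw_plateau[OF _ h_pos a(1) h_less_1] h_pos in auto)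
  moreover have "t < p" using t by simp
  then have "saw (a, h) x = model_orbit a h (Suc t)"
    using saw_model_orbit[OF a(1) less_imp_le[OF a(2)] a(3) laps] by (simp only: x_def)
  moreover have "model_orbit a h (Suc 0) = a" "model_orbit a h (Suc j) = h"
    using j(1) by simp_all
  ultimately have "t = 0 \<or> t = j"
    using Suc_inj[of t 0] Suc_inj[of t j] \<open>t < p\<close> j(2) p_pos by metis
  then show False using t by simp
qed

lemma strict_model_limit:
  assumes s: "s islimpt {a. strict_model a}" and plateau: "model_orbit s h j \<in> plateau"
  shows "strict_model s"
proof -
  note weak = strict_model_limit_weak[OF s]
  have hs: "h \<le> s"
    using weak(2)[OF _ _ orb_Suc_j_mod_less_1] model_orbit_Suc_j_mod p_pos p_ge_2 by simp
  note orbit = orb_eq_model_orbit_of_laps[OF hs weak(1) plateau weak(3)]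
  have s1: "s < 1"
  proof (rule ccontr)
    assume "\<not> s < 1"
    moreover have "orb (s, h) 1 = s"
      using orbit[of 1] p_ge_2 by simp
    ultimately have "1 \<le> (saw (s, h) ^^ (p - 1)) (orb (s, h) 1)"
      by (intro funpow_saw_ge_one) simp
    also have "\<dots> = orb (s, h) (p - 1 + 1)"
      by (rule orb_add[symmetric])
    also have "p - 1 + 1 = p"
      using p_ge_2 by simp
    finally show False
      using orbit[of p] model_orbit_period by simp
  qed
  have inj: "inj_on (model_orbit s h) {..<p}"
    using inj_on_model_orbit_limit[OF s plateau hs s1 weak(3)] .
  have strict_lap: "model_orbit s h t \<in> lap_interior s h (lap_of t)" if "t \<in> {1..<p} - {j}" for t
    using model_orbit_in_lap_interior[OF hs s1 plateau weak(3) inj that] .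
  have "model_orbit s h u < model_orbit s h t" if "u < p" "t < p" "orb w0 u < orb w0 t" for u t
    using weak(2)[OF that] inj that by (auto simp: inj_on_def order.order_iff_strict)
  with s1 strict_lap show ?thesis by (simp add: strict_model_def)
qed

lemma bone_horizontal:
  assumes "model_orbit a h j \<in> plateau"
  shows "(a, h) \<in> B"
proof -
  obtain a1 a2 where a12: "a1 < a2" "\<And>a. model_orbit a h j \<in> plateau \<longleftrightarrow> a \<in> {a1..a2}"
    using plateau_params by metis
  let ?G = "{a \<in> {a1..a2}. strict_model a}"
  have "?G = {} \<or> ?G = {a1..a2}"
  proof (rule connected_clopen[THEN iffD1, rule_format])
    show "openin (top_of_set {a1..a2}) ?G \<and> closedin (top_of_set {a1..a2}) ?G"
    proof
      have "?G = {a1..a2} \<inter> {a. strict_model a}" by auto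
      then show "openin (top_of_set {a1..a2}) ?G"
        using openin_open_Int[OF open_strict_model] by simp
      show "closedin (top_of_set {a1..a2}) ?G"
        unfolding closedin_limpt
        using strict_model_limit a12(2) islimpt_subset[of _ ?G "{a. strict_model a}"] by blast
    qed
  qed simp
  moreover have "fst w0 \<in> ?G"
  proof -
    from bone_cases[OF w0] have "(fst w0, h) \<in> B"
    proof
      assume "snd w0 = h \<and> model_orbit (fst w0) h j \<in> plateau"
      then show ?thesis using w0 by (metis prod.collapse)
    next
      assume "(model_orbit (fst w0) h j = (2 - h)/3 \<or> model_orbit (fst w0) h j = (2 + h)/3) \<and> snd w0 \<le> h"
      then show ?thesis using bone_vertical[OF w0, of h] h_pos by simp
    qed
    then show ?thesis
      using bone_imp_strict_model bone_plateau[OF w0] a12(2) by simp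
  qed
  ultimately have "strict_model a"
    using assms a12(2) by auto
  then show ?thesis using strict_model_imp_bone[OF assms] by simp
qed

lemma bone_eq:
  "B = {w. snd w = h \<and> model_orbit (fst w) h j \<in> plateau} \<union>
    {w. (model_orbit (fst w) h j = (2 - h)/3 \<or> model_orbit (fst w) h j = (2 + h)/3) \<and> 0 \<le> snd w \<and> snd w \<le> h}"
proof (intro equalityI subsetI)
  fix w assume "w \<in> B"
  then show "w \<in> {w. snd w = h \<and> model_orbit (fst w) h j \<in> plateau} \<union>
    {w. (model_orbit (fst w) h j = (2 - h)/3 \<or> model_orbit (fst w) h j = (2 + h)/3) \<and> 0 \<le> snd w \<and> snd w \<le> h}"
    using bone_cases bone_Tbar by (auto simp: Tbar_iff)
next
  fix w assume w: "w \<in> {w. snd w = h \<and> model_orbit (fst w) h j \<in> plateau} \<union>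
    {w. (model_orbit (fst w) h j = (2 - h)/3 \<or> model_orbit (fst w) h j = (2 + h)/3) \<and> 0 \<le> snd w \<and> snd w \<le> h}"
  then have "(fst w, h) \<in> B"
    using bone_horizontal h_pos by auto
  with w show "w \<in> B"
    using bone_vertical[of "(fst w, h)" "snd w"] by (auto simp: prod_eq_iff)
qed

lemma bone_eq_arch:
  obtains a1 a2 where "h < a1" "a1 < a2" "a2 < 1" "B = arch a1 a2 h"
    "\<And>a. model_orbit a h j \<in> {(2 - h)/3<..<(2 + h)/3} \<longleftrightarrow> a \<in> {a1<..<a2}"
proof (rule plateau_params)
  fix a1 a2 assume a12: "a1 < a2"
    "\<And>a. model_orbit a h j \<in> plateau \<longleftrightarrow> a \<in> {a1..a2}"
    "\<And>a. model_orbit a h j = (2 - h)/3 \<or> model_orbit a h j = (2 + h)/3 \<longleftrightarrow> a = a1 \<or> a = a2"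
    "\<And>a. model_orbit a h j \<in> {(2 - h)/3<..<(2 + h)/3} \<longleftrightarrow> a \<in> {a1<..<a2}"
  have "B = {w. snd w = h \<and> fst w \<in> {a1..a2}} \<union> {w. (fst w = a1 \<or> fst w = a2) \<and> 0 \<le> snd w \<and> snd w \<le> h}"
    unfolding bone_eq by (simp only: a12(2,3))
  also have "\<dots> = arch a1 a2 h"
    unfolding arch_def by (auto simp: mem_Times_iff)
  finally have arch: "B = arch a1 a2 h" .
  then have "(a1, h) \<in> B" "(a2, h) \<in> B"
    using a12(1) h_pos by (auto simp: arch_def)
  then have "h < a1" "a2 < 1"
    using h_less_fst fst_less_1 by fastforce+
  then show ?thesis
    using that a12(1,4) arch by blast
qed

lemma orbit_through_two_thirds:
  assumes w: "w \<in> B" and two_thirds: "2/3 \<in> range (orb w)"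
  shows "snd w = h \<and> model_orbit (fst w) h j \<in> {(2 - h)/3<..<(2 + h)/3}"
proof -
  have T: "w \<in> Tbar" using bone_Tbar[OF w] .
  obtain t where t: "t < p" "orb w t = 2/3"
    using two_thirds orb_mod[OF w] p_pos by (metis mod_less_divisor rangeE)
  have "t = j"
  proof (rule ccontr)
    assume "t \<noteq> j"
    have "t \<noteq> 0" using t by (auto intro: ccontr)
    moreover have "1/3 < orb w0 t"
      using orb_less_iff[OF w0 w, of 0 t] t by simp
    ultimately have "orb w (Suc j) < orb w (Suc t)"
      using orb_Suc_j_less[OF w _ t(1) _ \<open>t \<noteq> j\<close>] by simp
    moreover have "orb w (Suc t) = saw w (2/3)"
      using t(2) by (simp only: orb_Suc)
    then have "orb w (Suc t) = snd w"
      using saw_two_thirds[OF T] by simp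
    moreover have "snd w \<le> orb w (Suc j)"
      using saw_ge_snd[OF T] orb_j_gt_third[OF w] by (simp add: orb_Suc)
    ultimately show False by simp
  qed
  then have "model_orbit (fst w) h j = 2/3"
    using orb_eq_model_orbit[OF w, of j] j t by simp
  then show ?thesis using bone_cases[OF w] h_pos by auto
qed

lemma exists_orbit_through_two_thirds: "\<exists>w\<in>B. 2/3 \<in> range (orb w)"
proof -
  obtain \<alpha> \<beta> where affine: "\<And>a. model_orbit a h j = \<alpha> * a + \<beta>" and "\<alpha> \<noteq> 0"
    using model_orbit_affine[of j] j(1) by auto
  define a where "a = (2/3 - \<beta>) / \<alpha>"
  have "model_orbit a h j = 2/3"
    using \<open>\<alpha> \<noteq> 0\<close> by (simp add: affine a_def)
  moreover have "(a, h) \<in> B"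
    using bone_horizontal calculation h_pos by simp
  ultimately show ?thesis
    using orb_eq_model_orbit[of "(a, h)" j] j by (metis fst_conv less_imp_le rangeI)
qed

end

lemma bone_minus_arch:
  assumes "2 \<le> p" "\<sigma> ` {1..p} \<subseteq> {1..p}" "bone_minus p \<sigma> \<noteq> {}"
  obtains a1 a2 h where "0 < h" "h < a1" "a1 < a2" "a2 < 1" "bone_minus p \<sigma> = arch a1 a2 h"
    "\<And>w. w \<in> bone_minus p \<sigma> \<Longrightarrow> h \<in> range (orb w)"
    "\<And>w. w \<in> bone_minus p \<sigma> \<Longrightarrow> 2/3 \<in> range (orb w) \<Longrightarrow> snd w = h \<and> a1 < fst w \<and> fst w < a2"
    "\<exists>w \<in> bone_minus p \<sigma>. 2/3 \<in> range (orb w)"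
proof -
  interpret minus_bone p \<sigma>
    using assms(1,2) by unfold_locales
  obtain w0 where w0: "w0 \<in> B" using assms(3) by blast
  obtain j where "1 \<le> j" "j < p" "1/3 < orb w0 j"
    "\<And>t. 1 \<le> t \<Longrightarrow> t < p \<Longrightarrow> 1/3 < orb w0 t \<Longrightarrow> orb w0 (Suc j) \<le> orb w0 (Suc t)"
    using plateau_time_exists[OF w0] by metis
  moreover define h where "h = orb w0 (Suc j)"
  ultimately interpret minus_bone_plateau p \<sigma> w0 j h
    using w0 by unfold_locales auto
  show ?thesis
  proof (rule bone_eq_arch)
    fix a1 a2 assume arch: "h < a1" "a1 < a2" "a2 < 1" "B = arch a1 a2 h"
      and inner: "\<And>a. model_orbit a h j \<in> {(2 - h)/3<..<(2 + h)/3} \<longleftrightarrow> a \<in> {a1<..<a2}"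
    have "h \<in> range (orb w)" if "w \<in> B" for w
      using orb_Suc_j[OF that] by (metis rangeI)
    moreover have "snd w = h \<and> a1 < fst w \<and> fst w < a2" if "w \<in> B" "2/3 \<in> range (orb w)" for w
      using orbit_through_two_thirds[OF that] inner by simp
    ultimately show ?thesis
      using that[of h a1 a2] h_pos arch exists_orbit_through_two_thirds by blast
  qed
qed

section \<open>The bones \<open>B\<^sub>+\<close> and their intersections with the bones \<open>B\<^sub>-\<close>\<close>

lemma bone_plus_eq_reflect:
  assumes "\<sigma> ` {1..p} \<subseteq> {1..p}"
  shows "bone_plus p \<sigma> = reflect ` bone_minus p (rev_perm p \<sigma>)"
proof (intro equalityI subsetI)
  fix w assume "w \<in> bone_plus p \<sigma>"
  then have "reflect w \<in> bone_minus p (rev_perm p \<sigma>)"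
    using bone_plus_iff_reflect[OF assms] by blast
  then show "w \<in> reflect ` bone_minus p (rev_perm p \<sigma>)"
    by (rule image_eqI[rotated]) simp
next
  fix w assume "w \<in> reflect ` bone_minus p (rev_perm p \<sigma>)"
  then show "w \<in> bone_plus p \<sigma>"
    using bone_plus_iff_reflect[OF assms] by auto
qed

lemma bone_plus_bracket:
  assumes "2 \<le> p" "\<sigma> ` {1..p} \<subseteq> {1..p}" "bone_plus p \<sigma> \<noteq> {}"
  obtains b h1 h2 where "0 < h1" "h1 < h2" "h2 < b" "b < 1" "bone_plus p \<sigma> = bracket b h1 h2"
    "\<And>w. w \<in> bone_plus p \<sigma> \<Longrightarrow> b \<in> range (\<lambda>k. (saw w ^^ k) (2/3))"
    "\<And>w. w \<in> bone_plus p \<sigma> \<Longrightarrow> 1/3 \<in> range (\<lambda>k. (saw w ^^ k) (2/3)) \<Longrightarrow> fst w = b \<and> h1 < snd w \<and> snd w < h2"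
proof -
  let ?B = "bone_minus p (rev_perm p \<sigma>)"
  have eq: "bone_plus p \<sigma> = reflect ` ?B"
    using bone_plus_eq_reflect[OF assms(2)] .
  have orbit: "(saw w ^^ k) (2/3) = 1 - orb (reflect w) k" if "w \<in> bone_plus p \<sigma>" for w k
  proof -
    have "reflect w \<in> Tbar" using that by (auto simp: eq bone_minus_def)
    from funpow_saw_reflect[OF this, of k "1/3"] show ?thesis by (simp add: orb_def)
  qed
  have "?B \<noteq> {}" using assms(3) eq by blast
  show ?thesis
  proof (rule bone_minus_arch[OF assms(1) rev_perm_into[OF assms(2)] \<open>?B \<noteq> {}\<close>])
    fix a1 a2 h assume arch: "0 < h" "h < a1" "a1 < a2" "a2 < 1" "?B = arch a1 a2 h"
      and plateau: "\<And>w. w \<in> ?B \<Longrightarrow> h \<in> range (orb w)"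
      and two_thirds: "\<And>w. w \<in> ?B \<Longrightarrow> 2/3 \<in> range (orb w) \<Longrightarrow> snd w = h \<and> a1 < fst w \<and> fst w < a2"
    have refl_in: "reflect w \<in> ?B" if "w \<in> bone_plus p \<sigma>" for w
      using that eq by auto
    have "1 - h \<in> range (\<lambda>k. (saw w ^^ k) (2/3))" if "w \<in> bone_plus p \<sigma>" for w
      using plateau[OF refl_in[OF that]] orbit[OF that] by (auto simp: image_iff)
    moreover have "fst w = 1 - h \<and> 1 - a2 < snd w \<and> snd w < 1 - a1"
      if "w \<in> bone_plus p \<sigma>" "1/3 \<in> range (\<lambda>k. (saw w ^^ k) (2/3))" for w
    proof -
      have "2/3 \<in> range (orb (reflect w))"
        using that(2) orbit[OF that(1)] by (auto simp: image_iff)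
      then show ?thesis using two_thirds[OF refl_in[OF that(1)]] by (auto simp: reflect_def)
    qed
    moreover have "bone_plus p \<sigma> = bracket (1 - h) (1 - a2) (1 - a1)"
      using eq arch(5) reflect_arch by simp
    ultimately show ?thesis
      using that[of "1 - a2" "1 - a1" "1 - h"] arch(1-4) by simp
  qed
qed

lemma bone_inter_cases:
  assumes w: "w \<in> bone_minus p \<sigma>" "w \<in> bone_plus q \<tau>"
    and minus: "bone_minus p \<sigma> = arch a1 a2 h" "h \<in> range (orb w)"
      "2/3 \<in> range (orb w) \<Longrightarrow> snd w = h \<and> a1 < fst w \<and> fst w < a2"
    and plus: "bone_plus q \<tau> = bracket b h1 h2" "b \<in> range (\<lambda>k. (saw w ^^ k) (2/3))"
      "1/3 \<in> range (\<lambda>k. (saw w ^^ k) (2/3)) \<Longrightarrow> fst w = b \<and> h1 < snd w \<and> snd w < h2"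
  shows "(2/3 \<in> range (orb w) \<and> w = (b, h) \<and> a1 < b \<and> b < a2 \<and> h1 < h \<and> h < h2) \<or>
    (2/3 \<notin> range (orb w) \<and> fst w \<in> {a1, a2} \<and> snd w \<in> {h1, h2} \<and> b < fst w \<and> snd w < h)"
proof -
  have T: "w \<in> Tbar" using w(1) by (simp add: bone_minus_def)
  have per_third: "(saw w ^^ p) (1/3) = 1/3" "0 < p"
    using periodic_order_typeD[of "saw w" "1/3" p \<sigma>] w(1) by (auto simp: bone_minus_def)
  have per_two_thirds: "(saw w ^^ q) (2/3) = 2/3" "0 < q"
    using periodic_order_typeD[of "saw w" "2/3" q \<tau>] w(2) by (auto simp: bone_plus_def)
  show ?thesis
  proof (cases "2/3 \<in> range (orb w)")
    case True
    then obtain m where "(saw w ^^ 0) (2/3) = (saw w ^^ m) (1/3)"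
      by (auto simp: orb_def)
    then have "1/3 \<in> range (\<lambda>k. (saw w ^^ k) (2/3))"
      by (rule periodic_point_in_orbit[OF per_third])
    then show ?thesis using True minus(3) plus(3) by (auto simp: prod_eq_iff)
  next
    case False
    have "snd w \<noteq> h"
    proof
      assume "snd w = h"
      then obtain m where "(saw w ^^ m) (1/3) = (saw w ^^ 1) (2/3)"
        using minus(2) saw_two_thirds[OF T] by (auto simp: orb_def)
      then have "2/3 \<in> range (\<lambda>k. (saw w ^^ k) (1/3))"
        by (rule periodic_point_in_orbit[OF per_two_thirds])
      with False show False by (simp add: orb_def[abs_def])
    qed
    moreover have "fst w \<noteq> b"
    proof
      assume "fst w = b"
      then obtain m where "(saw w ^^ 1) (1/3) = (saw w ^^ m) (2/3)"
        using plus(2) saw_one_third[OF T] by auto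
      then have "2/3 \<in> range (\<lambda>k. (saw w ^^ k) (1/3))"
        by (rule periodic_point_in_orbit[OF per_two_thirds])
      with False show False by (simp add: orb_def[abs_def])
    qed
    moreover have "w \<in> arch a1 a2 h" "w \<in> bracket b h1 h2"
      using w minus(1) plus(1) by simp_all
    ultimately have "fst w \<in> {a1, a2} \<and> snd w < h" "snd w \<in> {h1, h2} \<and> b < fst w"
      by (auto simp: arch_def bracket_def)
    with False show ?thesis by simp
  qed
qed

lemma cyclic_perm_into: "cyclic_perm p \<sigma> \<Longrightarrow> \<sigma> ` {1..p} \<subseteq> {1..p}"
  unfolding cyclic_perm_def using permutes_image by blast

lemma bones_arch_bracket:
  assumes "2 \<le> p" "\<sigma> ` {1..p} \<subseteq> {1..p}" "2 \<le> q" "\<tau> ` {1..q} \<subseteq> {1..q}"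
    and "bone_minus p \<sigma> \<noteq> {}" "bone_plus q \<tau> \<noteq> {}"
  obtains a1 a2 h b h1 h2 where "arch_bracket a1 a2 h b h1 h2"
    "bone_minus p \<sigma> = arch a1 a2 h" "bone_plus q \<tau> = bracket b h1 h2"
    "\<And>w. w \<in> bone_minus p \<sigma> \<Longrightarrow> w \<in> bone_plus q \<tau> \<Longrightarrow> 2/3 \<in> range (orb w) \<Longrightarrow> w = (b, h)"
proof (rule bone_minus_arch[OF assms(1,2,5)])
  fix a1 a2 h assume arch: "0 < h" "h < a1" "a1 < a2" "a2 < 1" "bone_minus p \<sigma> = arch a1 a2 h"
    and minus: "\<And>w. w \<in> bone_minus p \<sigma> \<Longrightarrow> h \<in> range (orb w)"
      "\<And>w. w \<in> bone_minus p \<sigma> \<Longrightarrow> 2/3 \<in> range (orb w) \<Longrightarrow> snd w = h \<and> a1 < fst w \<and> fst w < a2"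
  show ?thesis
  proof (rule bone_plus_bracket[OF assms(3,4,6)])
    fix b h1 h2 assume bracket: "0 < h1" "h1 < h2" "h2 < b" "b < 1" "bone_plus q \<tau> = bracket b h1 h2"
      and plus: "\<And>w. w \<in> bone_plus q \<tau> \<Longrightarrow> b \<in> range (\<lambda>k. (saw w ^^ k) (2/3))"
        "\<And>w. w \<in> bone_plus q \<tau> \<Longrightarrow> 1/3 \<in> range (\<lambda>k. (saw w ^^ k) (2/3)) \<Longrightarrow> fst w = b \<and> h1 < snd w \<and> snd w < h2"
    have cases: "(2/3 \<in> range (orb w) \<and> w = (b, h) \<and> a1 < b \<and> b < a2 \<and> h1 < h \<and> h < h2) \<or>
      (2/3 \<notin> range (orb w) \<and> fst w \<in> {a1, a2} \<and> snd w \<in> {h1, h2} \<and> b < fst w \<and> snd w < h)"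
      if "w \<in> bone_minus p \<sigma>" "w \<in> bone_plus q \<tau>" for w
      by (rule bone_inter_cases[OF that arch(5) minus(1)[OF that(1)] minus(2)[OF that(1)]
            bracket(5) plus(1)[OF that(2)] plus(2)[OF that(2)]])
    have "arch_bracket a1 a2 h b h1 h2"
    proof
      fix w assume "w \<in> arch a1 a2 h \<inter> bracket b h1 h2"
      then show "(w = (b, h) \<and> a1 < b \<and> b < a2 \<and> h1 < h \<and> h < h2) \<or>
          (fst w \<in> {a1, a2} \<and> snd w \<in> {h1, h2} \<and> b < fst w \<and> snd w < h)"
        using cases[of w] arch(5) bracket(5) by blast
    qed (use arch(1-4) bracket(1-4) in simp_all)
    then show ?thesis
      using that arch(5) bracket(5) cases by blast
  qed
qed

lemma staircase_arc_bone_minus: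
  assumes "2 \<le> p" "\<sigma> ` {1..p} \<subseteq> {1..p}" "bone_minus p \<sigma> \<noteq> {}"
  shows "staircase_arc (bone_minus p \<sigma>)"
proof (rule bone_minus_arch[OF assms])
  fix a1 a2 h assume "0 < h" "h < a1" "a1 < a2" "a2 < 1" "bone_minus p \<sigma> = arch a1 a2 h"
  then show ?thesis using staircase_arc_arch[of h a1 a2] by simp
qed

lemma staircase_arc_bone_plus:
  assumes "2 \<le> p" "\<sigma> ` {1..p} \<subseteq> {1..p}" "bone_plus p \<sigma> \<noteq> {}"
  shows "staircase_arc (bone_plus p \<sigma>)"
proof (rule bone_plus_bracket[OF assms])
  fix b h1 h2 assume "0 < h1" "h1 < h2" "h2 < b" "b < 1" "bone_plus p \<sigma> = bracket b h1 h2"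
  then show ?thesis using staircase_arc_bracket[of h1 h2 b] by simp
qed

lemma bone_inter_crossings:
  assumes "2 \<le> p" "\<sigma> ` {1..p} \<subseteq> {1..p}" "2 \<le> q" "\<tau> ` {1..q} \<subseteq> {1..q}"
    and "bone_minus p \<sigma> \<noteq> {}" "bone_plus q \<tau> \<noteq> {}"
  shows "finite (bone_minus p \<sigma> \<inter> bone_plus q \<tau>) \<and> card (bone_minus p \<sigma> \<inter> bone_plus q \<tau>) \<in> {0, 2, 4} \<and>
    (\<forall>x \<in> bone_minus p \<sigma> \<inter> bone_plus q \<tau>. crosses_transversally_at (bone_minus p \<sigma>) (bone_plus q \<tau>) x)"
proof (rule bones_arch_bracket[OF assms])
  fix a1 a2 h b h1 h2
  assume "arch_bracket a1 a2 h b h1 h2" "bone_minus p \<sigma> = arch a1 a2 h" "bone_plus q \<tau> = bracket b h1 h2"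
  then show ?thesis
    using arch_bracket.finite_inter arch_bracket.card_inter_cases arch_bracket.crosses_transversally_inter
    by simp
qed

text \<open>A parameter of \<open>B\<^sub>-(o)\<close> whose critical orbit passes through \<open>2/3\<close> also lies in \<open>B\<^sub>+(o)\<close>,
  and it can only be the crossing of the top of the arch with the back of the bracket.\<close>
lemma dual_bones_inter_card:
  assumes "2 \<le> p" "\<sigma> ` {1..p} \<subseteq> {1..p}" "bone_minus p \<sigma> \<noteq> {}" "bone_plus p \<sigma> \<noteq> {}"
  shows "card (bone_minus p \<sigma> \<inter> bone_plus p \<sigma>) = 2"
proof -
  obtain w where w: "w \<in> bone_minus p \<sigma>" "2/3 \<in> range (orb w)"
    by (rule bone_minus_arch[OF assms(1-3)]) blast
  then obtain m where m: "(saw w ^^ m) (1/3) = 2/3"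
    by (auto simp: orb_def)
  have "periodic_order_type (saw w) ((saw w ^^ m) (1/3)) p \<sigma>"
    using periodic_order_type_funpow w(1) by (simp add: bone_minus_def)
  then have "w \<in> bone_plus p \<sigma>"
    using w(1) unfolding m by (simp add: bone_minus_def bone_plus_def)
  show ?thesis
  proof (rule bones_arch_bracket[OF assms(1,2,1,2,3,4)])
    fix a1 a2 h b h1 h2
    assume "arch_bracket a1 a2 h b h1 h2" "bone_minus p \<sigma> = arch a1 a2 h" "bone_plus p \<sigma> = bracket b h1 h2"
      and "\<And>w. w \<in> bone_minus p \<sigma> \<Longrightarrow> w \<in> bone_plus p \<sigma> \<Longrightarrow> 2/3 \<in> range (orb w) \<Longrightarrow> w = (b, h)"
    then show ?thesis
      using arch_bracket.card_inter_central w \<open>w \<in> bone_plus p \<sigma>\<close> by metis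
  qed
qed

theorem lemma3:
  shows
    "(\<forall>p \<sigma>. p \<ge> 2 \<longrightarrow> cyclic_perm p \<sigma> \<longrightarrow>
        (bone_minus p \<sigma> \<noteq> {} \<longrightarrow> staircase_arc (bone_minus p \<sigma>)) \<and>
        (bone_plus p \<sigma> \<noteq> {} \<longrightarrow> staircase_arc (bone_plus p \<sigma>)))
   \<and> (\<forall>p \<sigma> q \<tau>. p \<ge> 2 \<longrightarrow> cyclic_perm p \<sigma> \<longrightarrow> q \<ge> 2 \<longrightarrow> cyclic_perm q \<tau> \<longrightarrow>
        bone_minus p \<sigma> \<noteq> {} \<longrightarrow> bone_plus q \<tau> \<noteq> {} \<longrightarrow>
        finite (bone_minus p \<sigma> \<inter> bone_plus q \<tau>) \<and>
        card (bone_minus p \<sigma> \<inter> bone_plus q \<tau>) \<in> {0, 2, 4} \<and>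
        (\<forall>x \<in> bone_minus p \<sigma> \<inter> bone_plus q \<tau>.
           crosses_transversally_at (bone_minus p \<sigma>) (bone_plus q \<tau>) x))
   \<and> (\<forall>p \<sigma>. p \<ge> 2 \<longrightarrow> cyclic_perm p \<sigma> \<longrightarrow>
        bone_minus p \<sigma> \<noteq> {} \<longrightarrow> bone_plus p \<sigma> \<noteq> {} \<longrightarrow>
        card (bone_minus p \<sigma> \<inter> bone_plus p \<sigma>) = 2)"
proof (intro conjI)
  show "\<forall>p \<sigma>. p \<ge> 2 \<longrightarrow> cyclic_perm p \<sigma> \<longrightarrow>
      (bone_minus p \<sigma> \<noteq> {} \<longrightarrow> staircase_arc (bone_minus p \<sigma>)) \<and>
      (bone_plus p \<sigma> \<noteq> {} \<longrightarrow> staircase_arc (bone_plus p \<sigma>))"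
    by (intro allI impI conjI; rule staircase_arc_bone_minus staircase_arc_bone_plus)
      (assumption | rule cyclic_perm_into)+
  show "\<forall>p \<sigma> q \<tau>. p \<ge> 2 \<longrightarrow> cyclic_perm p \<sigma> \<longrightarrow> q \<ge> 2 \<longrightarrow> cyclic_perm q \<tau> \<longrightarrow>
      bone_minus p \<sigma> \<noteq> {} \<longrightarrow> bone_plus q \<tau> \<noteq> {} \<longrightarrow>
      finite (bone_minus p \<sigma> \<inter> bone_plus q \<tau>) \<and>
      card (bone_minus p \<sigma> \<inter> bone_plus q \<tau>) \<in> {0, 2, 4} \<and>
      (\<forall>x \<in> bone_minus p \<sigma> \<inter> bone_plus q \<tau>.
         crosses_transversally_at (bone_minus p \<sigma>) (bone_plus q \<tau>) x)"
    by (intro allI impI, rule bone_inter_crossings) (assumption | rule cyclic_perm_into)+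
  show "\<forall>p \<sigma>. p \<ge> 2 \<longrightarrow> cyclic_perm p \<sigma> \<longrightarrow>
      bone_minus p \<sigma> \<noteq> {} \<longrightarrow> bone_plus p \<sigma> \<noteq> {} \<longrightarrow>
      card (bone_minus p \<sigma> \<inter> bone_plus p \<sigma>) = 2"
    by (intro allI impI, rule dual_bones_inter_card) (assumption | rule cyclic_perm_into)+
qed

end
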